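(* Let $m\geq 2$, $h\geq 1$, and $G=T^+_{m,h}$ with root $r$, stem $r'$, and children $r_1,\dots,r_m$ of $r$. If $S$ is a Type II set for $G$, then $N_G[r]\setminus\mathcal{P}^\infty(S)=\{r',r_i\}$ for some $i\in[m]$ if $h$ is odd, and $N_G[r]\setminus\mathcal{P}^\infty(S)=\{r',r\}$ if $h$ is even. Furthermore, for all $k\ge0$, $$H^k_{m,h}=\begin{cases}\langle\mathcal{H}^{1}\oplus\mathcal{E}^{m-1}\rangle^k_{m,h-1}, & h\text{ odd},\\ \langle\mathcal{H}^{m}\oplus\mathcal{E}^{0}\rangle^k_{m,h-1}, & h\text{ even},\end{cases}$$ and $$E^k_{m,h}=\begin{cases}\langle\mathcal{H}^{0}\oplus\mathcal{E}^{m}\rangle^k_{m,h-1}+\sum_{\ell=0}^{m}\langle\mathcal{H}^{\ell}\oplus\mathcal{E}^{m-\ell}\rangle^{k-1}_{m,h-1}, & h\text{ odd},\\ \sum_{\ell=0}^{m-1}\langle\mathcal{H}^{\ell}\oplus\mathcal{E}^{m-\ell}\rangle^k_{m,h-1}+\sum_{\ell=0}^{m}\langle\mathcal{H}^{\ell}\oplus\mathcal{E}^{m-\ell}\rangle^{k-1}_{m,h-1}, & h\text{ even}.\end{cases}$$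
   Context: Power domination: for a graph $G=(V,E)$ and $S\subseteq V$, $\mathcal{P}^0(S)=N[S]$ and for $k\ge1$, $\mathcal{P}^k(S)=\mathcal{P}^{k-1}(S)\cup N^*(\mathcal{P}^{k-1}(S))$, where $x\in N^*(A)$ iff some $a\in A$ has $x$ as its only neighbor not in $A$; $\mathcal{P}^\infty(S)$ is the stable value (the set of observed vertices), and $S$ is a power dominating set if $\mathcal{P}^\infty(S)=V$. $T_{m,h}$ is the complete $m$-ary tree of height $h$ rooted at $r$; $T^+_{m,h}$ is $T_{m,h}$ plus a new vertex $r'$ (stem) joined to $r$. For $G=T^+_{m,h}$, a set $S\subseteq V(G)\setminus\{r'\}$ is Type I if it is a power dominating set for $G$; Type II if it is not but $S\cup\{r'\}$ is; Type 0 otherwise. $E^k_{m,h}$ and $H^k_{m,h}$ denote the numbers of Type I and Type II sets of size $k$ for $T^+_{m,h}$ (zero for $k<0$). Define $$\langle\mathcal{H}^{\ell}\oplus\mathcal{E}^{m-\ell}\rangle^k_{m,h}=\sum \binom{m}{\ell}\binom{\ell}{s_0,\dots,s_k}\binom{m-\ell}{t_0,\dots,t_k}\Big(\prod_{j=1}^{\ell}H^{i_j}_{m,h}\Big)\Big(\prod_{j=\ell+1}^{m}E^{i_j}_{m,h}\Big),$$ the sum over all tuples of nonnegative integers $(i_1,\dots,i_m)$ with $i_1\le\cdots\le i_\ell$, $i_{\ell+1}\le\cdots\le i_m$, and $i_1+\cdots+i_m=k$, where $s_\alpha=|\{j\in[\ell]:i_j=\alpha\}|$ and $t_\beta=|\{j\in[\ell+1,m]:i_j=\beta\}|$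 (empty sum $=0$ for $k<0$). *)

theory Defs
  imports Main
begin

definition closed_nbhd :: "'a set \<Rightarrow> ('a \<Rightarrow> 'a \<Rightarrow> bool) \<Rightarrow> 'a set \<Rightarrow> 'a set" where
  "closed_nbhd V E S = S \<union> {v \<in> V. \<exists>s\<in>S. E s v}"

definition forced :: "'a set \<Rightarrow> ('a \<Rightarrow> 'a \<Rightarrow> bool) \<Rightarrow> 'a set \<Rightarrow> 'a set" where
  "forced V E A = {x \<in> V. \<exists>a\<in>A. x \<notin> A \<and> E a x \<and> (\<forall>y\<in>V. E a y \<and> y \<notin> A \<longrightarrow> y = x)}"

fun pd_obs :: "'a set \<Rightarrow> ('a \<Rightarrow> 'a \<Rightarrow> bool) \<Rightarrow> 'a set \<Rightarrow> nat \<Rightarrow> 'a set" where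
  "pd_obs V E S 0 = closed_nbhd V E S"
| "pd_obs V E S (Suc k) = pd_obs V E S k \<union> forced V E (pd_obs V E S k)"

definition pd_obs_inf :: "'a set \<Rightarrow> ('a \<Rightarrow> 'a \<Rightarrow> bool) \<Rightarrow> 'a set \<Rightarrow> 'a set" where
  "pd_obs_inf V E S = (\<Union>k. pd_obs V E S k)"

definition power_dominating :: "'a set \<Rightarrow> ('a \<Rightarrow> 'a \<Rightarrow> bool) \<Rightarrow> 'a set \<Rightarrow> bool" where
  "power_dominating V E S \<longleftrightarrow> S \<subseteq> V \<and> pd_obs_inf V E S = V"

(* T^+_{m,h}: vertices None = stem r', Some xs = tree vertex addressed by the
   path xs from the root r = Some []; children of Some xs are Some (xs @ [i]), i < m. *)

definition tverts :: "nat \<Rightarrow> nat \<Rightarrow> nat list option set" where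
  "tverts m h = insert None (Some ` {xs. length xs \<le> h \<and> (\<forall>x\<in>set xs. x < m)})"

definition tadj :: "nat \<Rightarrow> nat \<Rightarrow> nat list option \<Rightarrow> nat list option \<Rightarrow> bool" where
  "tadj m h u v \<longleftrightarrow> u \<in> tverts m h \<and> v \<in> tverts m h \<and>
     ((u = None \<and> v = Some []) \<or> (u = Some [] \<and> v = None) \<or>
      (\<exists>xs i. u = Some xs \<and> v = Some (xs @ [i])) \<or>
      (\<exists>xs i. v = Some xs \<and> u = Some (xs @ [i])))"

definition typeI :: "nat \<Rightarrow> nat \<Rightarrow> nat list option set \<Rightarrow> bool" where
  "typeI m h S \<longleftrightarrow> S \<subseteq> tverts m h - {None} \<and> power_dominating (tverts m h) (tadj m h) S"

definition typeII :: "nat \<Rightarrow> nat \<Rightarrow> nat list option set \<Rightarrow> bool" where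
  "typeII m h S \<longleftrightarrow> S \<subseteq> tverts m h - {None} \<and> \<not> power_dominating (tverts m h) (tadj m h) S
     \<and> power_dominating (tverts m h) (tadj m h) (insert None S)"

(* E^k_{m,h} and H^k_{m,h}; k is an integer, and both are 0 for k < 0 *)
definition Ecnt :: "nat \<Rightarrow> nat \<Rightarrow> int \<Rightarrow> nat" where
  "Ecnt m h k = card {S. typeI m h S \<and> int (card S) = k}"

definition Hcnt :: "nat \<Rightarrow> nat \<Rightarrow> int \<Rightarrow> nat" where
  "Hcnt m h k = card {S. typeII m h S \<and> int (card S) = k}"

definition multinom :: "nat \<Rightarrow> (nat \<Rightarrow> nat) \<Rightarrow> nat \<Rightarrow> nat" where
  "multinom n s k = fact n div (\<Prod>\<alpha>\<le>k. fact (s \<alpha>))"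

(* <H^l (+) E^(m-l)>^k_{m,h}; a tuple (i_1,...,i_m) is the list xs, with
   (i_1..i_l) = take l xs and (i_{l+1}..i_m) = drop l xs *)
definition bracket :: "nat \<Rightarrow> nat \<Rightarrow> nat \<Rightarrow> int \<Rightarrow> nat" where
  "bracket m h l k =
    (\<Sum>xs \<in> {xs. length xs = m \<and> sorted (take l xs) \<and> sorted (drop l xs) \<and> int (sum_list xs) = k}.
       (m choose l)
       * multinom l (\<lambda>\<alpha>. count_list (take l xs) \<alpha>) (nat k)
       * multinom (m - l) (\<lambda>\<beta>. count_list (drop l xs) \<beta>) (nat k)
       * prod_list (map (\<lambda>i. Hcnt m h (int i)) (take l xs))
       * prod_list (map (\<lambda>i. Ecnt m h (int i)) (drop l xs)))"

end

theory Submission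
  imports Defs "HOL-Computational_Algebra.Formal_Power_Series" "HOL-Combinatorics.Multiset_Permutations"
begin

text \<open>Cutting the edges between the root \<open>r\<close> and its children \<open>r\<^sub>i\<close> splits \<open>T\<^sup>+\<^sub>m\<^sub>,\<^sub>h\<close> into \<open>m\<close>
  copies of \<open>T\<^sup>+\<^sub>m\<^sub>,\<^sub>h\<^sub>-\<^sub>1\<close>, in each of which \<open>r\<close> plays the stem. The set observed from \<open>S\<close> is the
  least set containing \<open>N[S]\<close> that is closed under forcing. Bounding it from below by the observations
  in the branches and from above by gluing force-closed branch sets shows: \<open>S\<close> is of Type I or II
  only if every branch is, and then its type depends only on whether \<open>r \<in> S\<close> and on the number of
  Type II branches. By induction on \<open>h\<close>, a Type II set never observes the stem and observes \<open>r\<close>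
  exactly when \<open>h\<close> is odd. Hence for odd \<open>h\<close> a Type II set has exactly one Type II branch (whose
  child \<open>r\<^sub>i\<close> stays unobserved), and for even \<open>h\<close> all its branches are of Type II. Encoding a set by
  the list of its branches turns the counts into the brackets, which count such lists by the number
  of Type II entries and the total size.\<close>

unbundle fps_syntax

section \<open>Observation as a least force-closed set\<close>

definition cannot_force :: "'a set \<Rightarrow> ('a \<Rightarrow> 'a \<Rightarrow> bool) \<Rightarrow> 'a set \<Rightarrow> 'a \<Rightarrow> bool" where
  "cannot_force V E X a \<longleftrightarrow> (\<forall>x\<in>V. E a x \<and> x \<notin> X \<longrightarrow> (\<exists>y\<in>V. E a y \<and> y \<notin> X \<and> y \<noteq> x))"

lemma forced_subset_iff_cannot_force: "forced V E X \<subseteq> X \<longleftrightarrow> (\<forall>a\<in>X. cannot_force V E X a)"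
  unfolding forced_def cannot_force_def by blast

lemma cannot_force_if_neighbours_in:
  "(\<And>x. x \<in> V \<Longrightarrow> E a x \<Longrightarrow> x \<in> X) \<Longrightarrow> cannot_force V E X a"
  unfolding cannot_force_def by blast

lemma cannot_force_if_two_neighbours_out:
  assumes "x1 \<noteq> x2" "x1 \<in> V" "x2 \<in> V" "E a x1" "E a x2" "x1 \<notin> X" "x2 \<notin> X"
  shows "cannot_force V E X a"
  unfolding cannot_force_def
proof (intro ballI impI)
  fix x assume "x \<in> V" "E a x \<and> x \<notin> X"
  show "\<exists>y\<in>V. E a y \<and> y \<notin> X \<and> y \<noteq> x"
    by (cases "x = x1") (use assms in auto)
qed

lemma cannot_force_insert_non_neighbour:
  "\<lbrakk>cannot_force V E X a; \<not> E a c\<rbrakk> \<Longrightarrow> cannot_force V E (insert c X) a"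
  unfolding cannot_force_def by blast

lemma forced_subset: "forced V E A \<subseteq> V"
  by (auto simp: forced_def)

lemma pd_obs_mono: "k \<le> k' \<Longrightarrow> pd_obs V E S k \<subseteq> pd_obs V E S k'"
  by (induction k' rule: dec_induct) auto

lemma pd_obs_inf_least:
  assumes "closed_nbhd V E S \<subseteq> X" "forced V E X \<subseteq> X"
  shows "pd_obs_inf V E S \<subseteq> X"
proof -
  have "pd_obs V E S k \<subseteq> X" for k
  proof (induction k)
    case (Suc k)
    then have "forced V E (pd_obs V E S k) \<subseteq> X \<union> forced V E X"
      unfolding forced_def by blast
    with Suc.IH assms(2) show ?case by auto
  qed (use assms in simp)
  then show ?thesis
    unfolding pd_obs_inf_def by blast
qed

lemma closed_nbhd_subset_pd_obs_inf: "closed_nbhd V E S \<subseteq> pd_obs_inf V E S"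
  unfolding pd_obs_inf_def by (metis UNIV_I UN_upper pd_obs.simps(1))

lemma pd_obs_inf_memI: "s \<in> S \<Longrightarrow> s \<in> pd_obs_inf V E S"
  using closed_nbhd_subset_pd_obs_inf[of V E S] unfolding closed_nbhd_def by blast

lemma pd_obs_inf_neighbourI: "\<lbrakk>s \<in> S; v \<in> V; E s v\<rbrakk> \<Longrightarrow> v \<in> pd_obs_inf V E S"
  using closed_nbhd_subset_pd_obs_inf[of V E S] unfolding closed_nbhd_def by blast

lemma pd_obs_inf_subset: "S \<subseteq> V \<Longrightarrow> pd_obs_inf V E S \<subseteq> V"
  using forced_subset[of V E]
  by (intro pd_obs_inf_least) (auto simp: closed_nbhd_def)

text \<open>Observation stops after finitely many steps, so the limit is closed under forcing.\<close>

lemma forced_pd_obs_inf_subset: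
  assumes "finite V"
  shows "forced V E (pd_obs_inf V E S) \<subseteq> pd_obs_inf V E S"
proof
  fix x assume "x \<in> forced V E (pd_obs_inf V E S)"
  then obtain a where a: "a \<in> pd_obs_inf V E S" "x \<notin> pd_obs_inf V E S" "E a x" "x \<in> V"
    and others: "\<forall>y\<in>V. E a y \<and> y \<notin> pd_obs_inf V E S \<longrightarrow> y = x"
    unfolding forced_def by blast
  define W where "W = {y\<in>V. E a y \<and> y \<noteq> x}"
  have "finite W"
    using assms unfolding W_def by auto
  have "\<forall>y\<in>W. \<exists>k. y \<in> pd_obs V E S k"
    using others unfolding W_def pd_obs_inf_def by blast
  then obtain kf where kf: "\<forall>y\<in>W. y \<in> pd_obs V E S (kf y)"
    by metis
  obtain ka where ka: "a \<in> pd_obs V E S ka"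
    using a(1) unfolding pd_obs_inf_def by blast
  define K where "K = max ka (Max (kf ` W))"
  have "a \<in> pd_obs V E S K"
    using ka pd_obs_mono[of ka K V E S] unfolding K_def by auto
  moreover have "\<forall>y\<in>W. y \<in> pd_obs V E S K"
  proof
    fix y assume "y \<in> W"
    then have "kf y \<le> K"
      using \<open>finite W\<close> unfolding K_def by (simp add: le_max_iff_disj)
    then show "y \<in> pd_obs V E S K"
      using kf \<open>y \<in> W\<close> pd_obs_mono[of "kf y" K V E S] by blast
  qed
  moreover have "x \<notin> pd_obs V E S K"
    using a(2) unfolding pd_obs_inf_def by blast
  ultimately have "x \<in> forced V E (pd_obs V E S K)"
    unfolding forced_def W_def using a by blast
  then have "x \<in> pd_obs V E S (Suc K)"
    by simp
  then show "x \<in> pd_obs_inf V E S"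
    unfolding pd_obs_inf_def by blast
qed

lemma pd_obs_inf_force:
  assumes "finite V" "a \<in> pd_obs_inf V E S" "x \<in> V" "E a x"
    "\<And>y. \<lbrakk>y \<in> V; E a y; y \<noteq> x\<rbrakk> \<Longrightarrow> y \<in> pd_obs_inf V E S"
  shows "x \<in> pd_obs_inf V E S"
  using forced_pd_obs_inf_subset[OF assms(1), of E S] assms(2-5)
  unfolding forced_def by blast

lemma pd_obs_inf_mono:
  assumes "finite V" "S \<subseteq> S'"
  shows "pd_obs_inf V E S \<subseteq> pd_obs_inf V E S'"
proof (rule pd_obs_inf_least)
  show "closed_nbhd V E S \<subseteq> pd_obs_inf V E S'"
    using closed_nbhd_subset_pd_obs_inf[of V E S'] assms(2) unfolding closed_nbhd_def by blast
qed (rule forced_pd_obs_inf_subset[OF assms(1)])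

section \<open>The trees \<open>T\<^sup>+\<^sub>m\<^sub>,\<^sub>h\<close>\<close>

abbreviation obs :: "nat \<Rightarrow> nat \<Rightarrow> nat list option set \<Rightarrow> nat list option set" where
  "obs m h S \<equiv> pd_obs_inf (tverts m h) (tadj m h) S"

abbreviation dominates :: "nat \<Rightarrow> nat \<Rightarrow> nat list option set \<Rightarrow> bool" where
  "dominates m h S \<equiv> obs m h S = tverts m h"

lemma tverts_Some: "Some xs \<in> tverts m h \<longleftrightarrow> length xs \<le> h \<and> (\<forall>x\<in>set xs. x < m)"
  by (auto simp: tverts_def)

lemma tverts_None [simp]: "None \<in> tverts m h"
  by (simp add: tverts_def)

lemma tverts_root [simp]: "Some [] \<in> tverts m h"
  by (simp add: tverts_Some)

lemma tverts_child: "\<lbrakk>1 \<le> h; i < m\<rbrakk> \<Longrightarrow> Some [i] \<in> tverts m h"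
  by (simp add: tverts_Some)

lemma finite_tverts [simp]: "finite (tverts m h)"
proof -
  have "{xs. length xs \<le> h \<and> (\<forall>x\<in>set xs. x < m)} = {xs. set xs \<subseteq> {..<m} \<and> length xs \<le> h}"
    by auto
  then show ?thesis
    using finite_lists_length_le[of "{..<m}" h] unfolding tverts_def by simp
qed

lemma tadj_in_tverts: "tadj m h u v \<Longrightarrow> u \<in> tverts m h \<and> v \<in> tverts m h"
  unfolding tadj_def by blast

lemma tadj_stem_left: "tadj m h None w \<longleftrightarrow> w = Some []"
  unfolding tadj_def by auto

lemma tadj_stem_right: "tadj m h w None \<longleftrightarrow> w = Some []"
  unfolding tadj_def by auto

lemma tadj_Some_Some:
  "tadj m h (Some xs) (Some ys) \<longleftrightarrow> Some xs \<in> tverts m h \<and> Some ys \<in> tverts m h \<and>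
     ((\<exists>i. ys = xs @ [i]) \<or> (\<exists>i. xs = ys @ [i]))"
  unfolding tadj_def by auto

lemma tadj_root: "tadj m h (Some []) w \<longleftrightarrow> w = None \<or> (\<exists>i<m. 1 \<le> h \<and> w = Some [i])"
  by (cases w) (auto simp: tadj_stem_right tadj_Some_Some tverts_Some)

lemma obs_subset_tverts: "T \<subseteq> tverts m h \<Longrightarrow> obs m h T \<subseteq> tverts m h"
  by (rule pd_obs_inf_subset)

lemma forced_obs_subset: "forced (tverts m h) (tadj m h) (obs m h T) \<subseteq> obs m h T"
  by (rule forced_pd_obs_inf_subset) simp

lemma stem_in_obs_if_root_neighbours:
  assumes "Some [] \<in> obs m h T" "\<And>j. \<lbrakk>j < m; 1 \<le> h\<rbrakk> \<Longrightarrow> Some [j] \<in> obs m h T"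
  shows "None \<in> obs m h T"
  by (rule pd_obs_inf_force[where a = "Some []"]) (use assms in \<open>auto simp: tadj_root\<close>)

lemma child_in_obs_if_root_neighbours:
  assumes "1 \<le> h" "i < m" "Some [] \<in> obs m h T" "None \<in> obs m h T"
    "\<And>j. \<lbrakk>j < m; j \<noteq> i\<rbrakk> \<Longrightarrow> Some [j] \<in> obs m h T"
  shows "Some [i] \<in> obs m h T"
  by (rule pd_obs_inf_force[where a = "Some []"]) (use assms in \<open>auto simp: tadj_root tverts_Some\<close>)

text \<open>\<open>lift i\<close> identifies \<open>T\<^sup>+\<^sub>m\<^sub>,\<^sub>h\<^sub>-\<^sub>1\<close> with the \<open>i\<close>-th subtree of the root of
  \<open>T\<^sup>+\<^sub>m\<^sub>,\<^sub>h\<close> together with the root, which plays the role of the stem.\<close>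

definition lift :: "nat \<Rightarrow> nat list option \<Rightarrow> nat list option" where
  "lift i y = (case y of None \<Rightarrow> Some [] | Some ys \<Rightarrow> Some (i # ys))"

lemma lift_simps [simp]: "lift i None = Some []" "lift i (Some ys) = Some (i # ys)"
  by (auto simp: lift_def)

lemma lift_neq_None [simp]: "lift i y \<noteq> None" "None \<noteq> lift i y"
  by (cases y; simp)+

lemma lift_eq_root_iff [simp]: "lift i y = Some [] \<longleftrightarrow> y = None" "Some [] = lift i y \<longleftrightarrow> y = None"
  by (cases y; auto)+

lemma lift_eq_Cons_iff [simp]:
  "lift i y = Some (j # ys) \<longleftrightarrow> i = j \<and> y = Some ys"
  "Some (j # ys) = lift i y \<longleftrightarrow> i = j \<and> y = Some ys"
  by (cases y; auto)+

lemma lift_eq_lift_iff: "\<lbrakk>y \<noteq> None; z \<noteq> None\<rbrakk> \<Longrightarrow> lift i y = lift j z \<longleftrightarrow> i = j \<and> y = z"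
  by (cases y; cases z) auto

lemma inj_lift: "inj (lift i)"
  unfolding inj_def lift_def by (auto split: option.splits)

lemma lift_in_tverts_iff: "\<lbrakk>1 \<le> h; i < m\<rbrakk> \<Longrightarrow> lift i y \<in> tverts m h \<longleftrightarrow> y \<in> tverts m (h - 1)"
  by (cases y) (auto simp: tverts_Some)

lemma tadj_lift_iff:
  assumes "1 \<le> h" "i < m"
  shows "tadj m h (lift i y) (lift i z) \<longleftrightarrow> tadj m (h - 1) y z"
  using assms
  by (cases y; cases z) (auto simp: tadj_Some_Some tadj_stem_left tadj_stem_right tverts_Some)

lemma tadj_lift_imp_lift:
  assumes h: "1 \<le> h" and i: "i < m" and "y \<noteq> None" "tadj m h (lift i y) w"
  shows "\<exists>z\<in>tverts m (h - 1). w = lift i z"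
proof -
  obtain ys where ys: "y = Some ys"
    using assms(3) by auto
  have wV: "w \<in> tverts m h"
    using assms(4) tadj_in_tverts by blast
  show ?thesis
  proof (cases w)
    case None
    then show ?thesis
      using assms(4) ys by (simp add: tadj_stem_right)
  next
    case (Some ws)
    then consider j where "ws = i # (ys @ [j])" | j where "i # ys = ws @ [j]"
      using assms(4) ys by (auto simp: tadj_Some_Some)
    then show ?thesis
    proof cases
      case (1 j)
      then show ?thesis
        using wV Some by (intro bexI[of _ "Some (ys @ [j])"]) (auto simp: tverts_Some)
    next
      case (2 j)
      then show ?thesis
        using wV Some h
        by (cases ws) (auto intro!: bexI[of _ None] bexI[of _ "Some (tl ws)"] simp: tverts_Some)
    qed
  qed
qed

lemma tverts_cases:
  assumes "1 \<le> h" "v \<in> tverts m h"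
  obtains "v = None" | "v = Some []" | i y where "i < m" "y \<in> tverts m (h - 1)" "y \<noteq> None" "v = lift i y"
proof (cases v)
  case (Some xs)
  then show ?thesis
    using assms that by (cases xs) (auto simp: tverts_Some)
qed (use that in auto)

definition glue :: "nat \<Rightarrow> bool \<Rightarrow> bool \<Rightarrow> (nat \<Rightarrow> nat list option set) \<Rightarrow> nat list option set" where
  "glue m with_root with_stem Cs =
     (if with_stem then {None} else {}) \<union> (if with_root then {Some []} else {}) \<union> (\<Union>i<m. lift i ` (Cs i - {None}))"

definition branch :: "nat \<Rightarrow> nat list option set \<Rightarrow> nat list option set" where
  "branch i S = {y. y \<noteq> None \<and> lift i y \<in> S}"

lemma stem_in_glue_iff [simp]: "None \<in> glue m with_root with_stem Cs \<longleftrightarrow> with_stem"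
  by (auto simp: glue_def)

lemma root_in_glue_iff [simp]: "Some [] \<in> glue m with_root with_stem Cs \<longleftrightarrow> with_root"
  by (auto simp: glue_def)

lemma lift_in_glue_iff: "\<lbrakk>i < m; y \<noteq> None\<rbrakk> \<Longrightarrow> lift i y \<in> glue m with_root with_stem Cs \<longleftrightarrow> y \<in> Cs i"
  by (cases y) (auto simp: glue_def image_iff)

lemma child_in_glue_iff: "i < m \<Longrightarrow> Some [i] \<in> glue m with_root with_stem Cs \<longleftrightarrow> Some [] \<in> Cs i"
  using lift_in_glue_iff[of i m "Some []"] by simp

lemma glueE:
  assumes "v \<in> glue m with_root with_stem Cs"
  obtains "v = None" "with_stem" | "v = Some []" "with_root"
    | i y where "i < m" "y \<noteq> None" "y \<in> Cs i" "v = lift i y"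
proof -
  have "(with_stem \<and> v = None) \<or> (with_root \<and> v = Some []) \<or> (\<exists>i<m. v \<in> lift i ` (Cs i - {None}))"
    using assms unfolding glue_def by (auto split: if_splits)
  then show ?thesis
    using that by blast
qed

lemma glue_subset_tverts:
  assumes "1 \<le> h" "\<And>i. i < m \<Longrightarrow> Cs i \<subseteq> tverts m (h - 1)"
  shows "glue m with_root with_stem Cs \<subseteq> tverts m h"
proof
  fix v assume "v \<in> glue m with_root with_stem Cs"
  then show "v \<in> tverts m h"
  proof (cases rule: glueE)
    case (3 i y)
    then show ?thesis
      using assms(2)[OF 3(1)] lift_in_tverts_iff[OF assms(1) 3(1)] by auto
  qed auto
qed

lemma None_notin_branch [simp]: "None \<notin> branch i S"
  by (simp add: branch_def)

lemma branch_insert_stem [simp]: "branch i (insert None S) = branch i S"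
  by (auto simp: branch_def)

lemma branch_subset_tverts:
  assumes "S \<subseteq> tverts m h" "1 \<le> h" "i < m"
  shows "branch i S \<subseteq> tverts m (h - 1)"
proof
  fix y assume "y \<in> branch i S"
  then have "lift i y \<in> tverts m h"
    using assms(1) by (auto simp: branch_def)
  then show "y \<in> tverts m (h - 1)"
    using lift_in_tverts_iff[OF assms(2,3)] by blast
qed

lemma branch_glue:
  assumes "i < m"
  shows "branch i (glue m with_root with_stem Cs) = Cs i - {None}"
proof (rule set_eqI)
  fix y
  show "y \<in> branch i (glue m with_root with_stem Cs) \<longleftrightarrow> y \<in> Cs i - {None}"
    by (cases "y = None") (simp_all add: branch_def lift_in_glue_iff[OF assms])
qed

lemma glue_branch:
  assumes "1 \<le> h" "S \<subseteq> tverts m h" "None \<notin> S"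
  shows "glue m (Some [] \<in> S) False (\<lambda>i. branch i S) = S"
proof (rule set_eqI)
  fix v
  show "v \<in> glue m (Some [] \<in> S) False (\<lambda>i. branch i S) \<longleftrightarrow> v \<in> S"
  proof
    assume "v \<in> S"
    have "v \<in> tverts m h"
      using assms(2) \<open>v \<in> S\<close> by blast
    moreover have "v \<noteq> None"
      using assms(3) \<open>v \<in> S\<close> by metis
    ultimately show "v \<in> glue m (Some [] \<in> S) False (\<lambda>i. branch i S)"
    proof (elim tverts_cases[OF assms(1)])
      fix i y assume "i < m" "y \<in> tverts m (h - 1)" "y \<noteq> None" "v = lift i y"
      then show ?thesis
        using \<open>v \<in> S\<close> lift_in_glue_iff[of i m y] by (simp add: branch_def)
    qed (use \<open>v \<in> S\<close> in auto)
  next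
    assume "v \<in> glue m (Some [] \<in> S) False (\<lambda>i. branch i S)"
    then show "v \<in> S"
      by (cases rule: glueE) (auto simp: branch_def)
  qed
qed

lemma glue_branch_insert_stem:
  assumes "1 \<le> h" "S \<subseteq> tverts m h" "None \<notin> S"
  shows "glue m (Some [] \<in> S) True (\<lambda>i. branch i S) = insert None S"
proof -
  have "glue m r True Cs = insert None (glue m r False Cs)" for r Cs
    unfolding glue_def by simp
  then show ?thesis
    using glue_branch[OF assms] by simp
qed

section \<open>Bounds on the observed set through the branches\<close>

text \<open>The stem of the
  branch counts only when both ends of the edge \<open>r r\<^sub>i\<close> are in \<open>P\<close>: a force of the stem inside the
  branch is then a force of \<open>r\<^sub>i\<close> by \<open>r\<close>.\<close>

definition pullback :: "nat \<Rightarrow> nat \<Rightarrow> nat list option set \<Rightarrow> nat \<Rightarrow> nat list option set" where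
  "pullback m h P i =
     {y \<in> tverts m (h - 1). if y = None then Some [] \<in> P \<and> Some [i] \<in> P else lift i y \<in> P}"

lemma stem_in_pullbackD: "None \<in> pullback m h P i \<Longrightarrow> Some [] \<in> P \<and> Some [i] \<in> P"
  by (simp add: pullback_def)

lemma lift_in_pullbackD: "\<lbrakk>y \<in> pullback m h P i; y \<noteq> None\<rbrakk> \<Longrightarrow> lift i y \<in> P"
  by (simp add: pullback_def)

lemma child_in_pullbackD: "Some [] \<in> pullback m h P i \<Longrightarrow> Some [i] \<in> P"
  using lift_in_pullbackD[of "Some []" m h P i] by simp

lemma forced_pullback_subset:
  assumes h: "1 \<le> h" and i: "i < m" and closed: "forced (tverts m h) (tadj m h) P \<subseteq> P"
  shows "forced (tverts m (h - 1)) (tadj m (h - 1)) (pullback m h P i) \<subseteq> pullback m h P i"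
proof
  let ?Y = "pullback m h P i"
  fix x assume "x \<in> forced (tverts m (h - 1)) (tadj m (h - 1)) ?Y"
  then obtain a where xV: "x \<in> tverts m (h - 1)" and aY: "a \<in> ?Y" and ax: "tadj m (h - 1) a x"
    and others: "\<And>y. \<lbrakk>y \<in> tverts m (h - 1); tadj m (h - 1) a y; y \<notin> ?Y\<rbrakk> \<Longrightarrow> y = x"
    unfolding forced_def by blast
  show "x \<in> ?Y"
  proof (cases "a = None")
    case True
    then show ?thesis
      using ax aY xV by (simp add: tadj_stem_left pullback_def)
  next
    case False
    have "lift i x \<in> forced (tverts m h) (tadj m h) P \<or> lift i x \<in> P"
    proof -
      have "w \<in> P" if w: "w \<in> tverts m h" "tadj m h (lift i a) w" "w \<noteq> lift i x" for w
      proof -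
        obtain z where z: "z \<in> tverts m (h - 1)" "w = lift i z"
          using tadj_lift_imp_lift[OF h i False w(2)] by blast
        then have "z \<in> ?Y"
          using others[OF z(1)] w(2,3) tadj_lift_iff[OF h i] by auto
        then show "w \<in> P"
          using z by (cases "z = None") (auto simp: pullback_def)
      qed
      moreover have "lift i a \<in> P"
        using aY False by (simp add: pullback_def)
      moreover have "tadj m h (lift i a) (lift i x)" "lift i x \<in> tverts m h"
        using ax xV tadj_lift_iff[OF h i] lift_in_tverts_iff[OF h i] by simp_all
      ultimately show ?thesis
        unfolding forced_def by blast
    qed
    then have "lift i x \<in> P"
      using closed by blast
    moreover have "a = Some []" if "x = None"
      using ax that by (simp add: tadj_stem_right)
    ultimately show ?thesis
      using aY xV by (cases "x = None") (auto simp: pullback_def)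
  qed
qed

lemma obs_branch_subset_pullback:
  assumes h: "1 \<le> h" and i: "i < m" and S: "S \<subseteq> tverts m h"
  shows "obs m (h - 1) (branch i S) \<subseteq> pullback m h (obs m h S) i"
proof (rule pd_obs_inf_least)
  let ?P = "obs m h S"
  show "forced (tverts m (h - 1)) (tadj m (h - 1)) (pullback m h ?P i) \<subseteq> pullback m h ?P i"
    by (rule forced_pullback_subset[OF h i forced_obs_subset])
  show "closed_nbhd (tverts m (h - 1)) (tadj m (h - 1)) (branch i S) \<subseteq> pullback m h ?P i"
  proof
    fix v assume "v \<in> closed_nbhd (tverts m (h - 1)) (tadj m (h - 1)) (branch i S)"
    then obtain t where t: "t \<in> branch i S" "v = t \<or> tadj m (h - 1) t v" "v \<in> tverts m (h - 1)"
      unfolding closed_nbhd_def using branch_subset_tverts[OF S h i] by blast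
    then have "lift i t \<in> S" "t \<noteq> None"
      by (auto simp: branch_def)
    have "lift i v \<in> ?P"
      using t(2)
    proof
      assume "tadj m (h - 1) t v"
      then have "tadj m h (lift i t) (lift i v)"
        using tadj_lift_iff[OF h i] by simp
      moreover have "lift i v \<in> tverts m h"
        using t(3) lift_in_tverts_iff[OF h i] by simp
      ultimately show ?thesis
        using pd_obs_inf_neighbourI[OF \<open>lift i t \<in> S\<close>] by blast
    qed (use \<open>lift i t \<in> S\<close> pd_obs_inf_memI in simp)
    moreover have "Some [i] \<in> ?P" if "v = None"
      using t(2) that \<open>lift i t \<in> S\<close> \<open>t \<noteq> None\<close>
      by (auto simp: tadj_stem_right intro: pd_obs_inf_memI)
    ultimately show "v \<in> pullback m h ?P i"
      using t(3) by (auto simp: pullback_def)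
  qed
qed

lemma obs_insert_stem_branch_subset_pullback:
  assumes h: "1 \<le> h" and i: "i < m" and S: "S \<subseteq> tverts m h"
    and observed: "Some [] \<in> obs m h S" "Some [i] \<in> obs m h S"
  shows "obs m (h - 1) (insert None (branch i S)) \<subseteq> pullback m h (obs m h S) i"
proof (rule pd_obs_inf_least)
  let ?P = "obs m h S"
  show "forced (tverts m (h - 1)) (tadj m (h - 1)) (pullback m h ?P i) \<subseteq> pullback m h ?P i"
    by (rule forced_pullback_subset[OF h i forced_obs_subset])
  have "closed_nbhd (tverts m (h - 1)) (tadj m (h - 1)) (branch i S) \<subseteq> pullback m h ?P i"
    using obs_branch_subset_pullback[OF assms(1-3)]
      closed_nbhd_subset_pd_obs_inf[of "tverts m (h - 1)" "tadj m (h - 1)" "branch i S"] by blast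
  moreover have "closed_nbhd (tverts m (h - 1)) (tadj m (h - 1)) {None} \<subseteq> pullback m h ?P i"
    using observed by (auto simp: closed_nbhd_def pullback_def tadj_stem_left)
  ultimately show "closed_nbhd (tverts m (h - 1)) (tadj m (h - 1)) (insert None (branch i S)) \<subseteq> pullback m h ?P i"
    unfolding closed_nbhd_def by blast
qed

lemma dominates_if_pullbacks:
  assumes h: "1 \<le> h" and T: "T \<subseteq> tverts m h" and "None \<in> obs m h T" "Some [] \<in> obs m h T"
    and branches: "\<And>i. i < m \<Longrightarrow> tverts m (h - 1) \<subseteq> pullback m h (obs m h T) i"
  shows "dominates m h T"
proof (rule antisym)
  show "obs m h T \<subseteq> tverts m h"
    using T by (rule obs_subset_tverts)
  show "tverts m h \<subseteq> obs m h T"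
  proof
    fix v assume "v \<in> tverts m h"
    then show "v \<in> obs m h T"
      by (rule tverts_cases[OF h]) (use assms lift_in_pullbackD in blast)+
  qed
qed

lemma cannot_force_tverts: "cannot_force (tverts m h) (tadj m h) (tverts m h) a"
  unfolding cannot_force_def by blast

lemma cannot_force_obs: "a \<in> obs m h T \<Longrightarrow> cannot_force (tverts m h) (tadj m h) (obs m h T) a"
  using forced_obs_subset[of m h T] unfolding forced_subset_iff_cannot_force by blast

lemma cannot_force_insert_stem_obs:
  "\<lbrakk>a \<in> obs m h T; a \<noteq> Some []\<rbrakk> \<Longrightarrow> cannot_force (tverts m h) (tadj m h) (insert None (obs m h T)) a"
  by (rule cannot_force_insert_non_neighbour[OF cannot_force_obs]) (simp_all add: tadj_stem_right)

lemma cannot_force_lift: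
  assumes h: "1 \<le> h" and i: "i < m" and "y \<noteq> None"
    and mem: "\<And>z. z \<in> C \<longleftrightarrow> lift i z \<in> X"
    and stuck: "cannot_force (tverts m (h - 1)) (tadj m (h - 1)) C y"
  shows "cannot_force (tverts m h) (tadj m h) X (lift i y)"
  unfolding cannot_force_def
proof (intro ballI impI)
  fix x assume x: "x \<in> tverts m h" "tadj m h (lift i y) x \<and> x \<notin> X"
  obtain z where z: "z \<in> tverts m (h - 1)" "x = lift i z"
    using tadj_lift_imp_lift[OF h i assms(3)] x(2) by blast
  have "tadj m (h - 1) y z" "z \<notin> C"
    using x(2) z(2) tadj_lift_iff[OF h i] mem by auto
  then obtain w where w: "w \<in> tverts m (h - 1)" "tadj m (h - 1) y w" "w \<notin> C" "w \<noteq> z"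
    using stuck z(1) unfolding cannot_force_def by blast
  show "\<exists>v\<in>tverts m h. tadj m h (lift i y) v \<and> v \<notin> X \<and> v \<noteq> x"
  proof (intro bexI conjI)
    show "lift i w \<in> tverts m h"
      using w(1) lift_in_tverts_iff[OF h i] by simp
    show "tadj m h (lift i y) (lift i w)"
      using w(2) tadj_lift_iff[OF h i] by simp
    show "lift i w \<notin> X"
      using w(3) mem by simp
    show "lift i w \<noteq> x"
      using w(4) z(2) injD[OF inj_lift] by blast
  qed
qed

text \<open>In the upper bounds below, the stem of each branch set \<open>Cs i\<close> stands for the root of the
  whole tree; its membership must therefore agree with the root flag.\<close>

lemma forced_glue_subset:
  assumes h: "1 \<le> h"
    and Cs_stem: "\<And>i. i < m \<Longrightarrow> None \<in> Cs i \<longleftrightarrow> with_root"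
    and stem_root: "with_stem \<Longrightarrow> with_root"
    and root: "with_root \<Longrightarrow> cannot_force (tverts m h) (tadj m h) (glue m with_root with_stem Cs) (Some [])"
    and branches: "\<And>i y. \<lbrakk>i < m; y \<in> Cs i; y \<noteq> None\<rbrakk> \<Longrightarrow>
      cannot_force (tverts m (h - 1)) (tadj m (h - 1)) (Cs i) y"
  shows "forced (tverts m h) (tadj m h) (glue m with_root with_stem Cs) \<subseteq> glue m with_root with_stem Cs"
  unfolding forced_subset_iff_cannot_force
proof
  let ?X = "glue m with_root with_stem Cs"
  fix a assume "a \<in> ?X"
  then show "cannot_force (tverts m h) (tadj m h) ?X a"
  proof (cases rule: glueE)
    case 1
    then show ?thesis
      using stem_root by (intro cannot_force_if_neighbours_in) (simp add: tadj_stem_left)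
  next
    case 2
    then show ?thesis
      using root by simp
  next
    case (3 i y)
    have "z \<in> Cs i \<longleftrightarrow> lift i z \<in> ?X" for z
      using Cs_stem[OF 3(1)] lift_in_glue_iff[OF 3(1)] by (cases "z = None") simp_all
    from cannot_force_lift[OF h 3(1,2) this branches[OF 3(1,3,2)]] show ?thesis
      using 3(4) by simp
  qed
qed

lemma closed_nbhd_glue_subset:
  assumes h: "1 \<le> h"
    and Cs_stem: "\<And>i. i < m \<Longrightarrow> None \<in> Cs i \<longleftrightarrow> with_root"
    and src_root: "src_root \<Longrightarrow> with_root \<and> with_stem \<and> (\<forall>i<m. Some [] \<in> Cs i)"
    and src_stem: "src_stem \<Longrightarrow> with_root \<and> with_stem"
    and branches: "\<And>i. i < m \<Longrightarrow>
      closed_nbhd (tverts m (h - 1)) (tadj m (h - 1)) (Ss i - {None}) \<subseteq> Cs i"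
  shows "closed_nbhd (tverts m h) (tadj m h) (glue m src_root src_stem Ss) \<subseteq> glue m with_root with_stem Cs"
proof
  let ?X = "glue m with_root with_stem Cs"
  fix v assume "v \<in> closed_nbhd (tverts m h) (tadj m h) (glue m src_root src_stem Ss)"
  then obtain s where s: "s \<in> glue m src_root src_stem Ss" and sv: "s = v \<or> tadj m h s v"
    unfolding closed_nbhd_def by blast
  from s show "v \<in> ?X"
  proof (cases rule: glueE)
    case 1
    then have "v = None \<or> v = Some []"
      using sv tadj_stem_left by auto
    then show ?thesis
      using src_stem 1(2) by auto
  next
    case 2
    then have "v = Some [] \<or> v = None \<or> (\<exists>j<m. v = Some [j])"
      using sv tadj_root by auto
    then show ?thesis
      using src_root 2(2) child_in_glue_iff by auto
  next
    case (3 i t)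
    have mem: "z \<in> Cs i \<Longrightarrow> lift i z \<in> ?X" for z
      using Cs_stem[OF 3(1)] lift_in_glue_iff[OF 3(1)] by (cases "z = None") simp_all
    from sv show ?thesis
    proof
      assume "s = v"
      moreover have "t \<in> Cs i"
        using 3 branches[OF 3(1)] unfolding closed_nbhd_def by blast
      ultimately show ?thesis
        using 3(4) mem by blast
    next
      assume "tadj m h s v"
      then obtain z where z: "z \<in> tverts m (h - 1)" "v = lift i z"
        using tadj_lift_imp_lift[OF h 3(1,2)] 3(4) by blast
      then have "tadj m (h - 1) t z"
        using \<open>tadj m h s v\<close> 3(4) tadj_lift_iff[OF h 3(1)] by simp
      then have "z \<in> Cs i"
        using 3 z(1) branches[OF 3(1)] unfolding closed_nbhd_def by blast
      then show ?thesis
        using z(2) mem by simp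
    qed
  qed
qed

lemma obs_glue_subset:
  assumes h: "1 \<le> h"
    and Cs_stem: "\<And>i. i < m \<Longrightarrow> None \<in> Cs i \<longleftrightarrow> with_root"
    and stem_root: "with_stem \<Longrightarrow> with_root"
    and root: "with_root \<Longrightarrow> cannot_force (tverts m h) (tadj m h) (glue m with_root with_stem Cs) (Some [])"
    and branches_stuck: "\<And>i y. \<lbrakk>i < m; y \<in> Cs i; y \<noteq> None\<rbrakk> \<Longrightarrow>
      cannot_force (tverts m (h - 1)) (tadj m (h - 1)) (Cs i) y"
    and src_root: "src_root \<Longrightarrow> with_root \<and> with_stem \<and> (\<forall>i<m. Some [] \<in> Cs i)"
    and src_stem: "src_stem \<Longrightarrow> with_root \<and> with_stem"
    and branches_nbhd: "\<And>i. i < m \<Longrightarrow>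
      closed_nbhd (tverts m (h - 1)) (tadj m (h - 1)) (Ss i - {None}) \<subseteq> Cs i"
  shows "obs m h (glue m src_root src_stem Ss) \<subseteq> glue m with_root with_stem Cs"
  by (rule pd_obs_inf_least[OF closed_nbhd_glue_subset[OF h Cs_stem src_root src_stem branches_nbhd]
        forced_glue_subset[OF h Cs_stem stem_root root branches_stuck]])

section \<open>Observation of \<open>S\<close> from the observation of its branches\<close>

context
  fixes m h :: nat and S :: "nat list option set"
  assumes h: "1 \<le> h" and S: "S \<subseteq> tverts m h" and stem_notin: "None \<notin> S"
begin

lemma glue_branches: "glue m (Some [] \<in> S) False (\<lambda>i. branch i S) = S"
  by (rule glue_branch[OF h S stem_notin])

lemma glue_branches_insert_stem: "glue m (Some [] \<in> S) True (\<lambda>i. branch i S) = insert None S"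
  by (rule glue_branch_insert_stem[OF h S stem_notin])

lemma insert_stem_subset_tverts: "insert None S \<subseteq> tverts m h"
  using S by simp

lemma obs_branch_subset_tverts: "i < m \<Longrightarrow> obs m (h - 1) (branch i S) \<subseteq> tverts m (h - 1)"
  by (rule obs_subset_tverts[OF branch_subset_tverts[OF S h]])

lemma obs_branch_subset_obs_insert_stem:
  "obs m (h - 1) (branch i S) \<subseteq> obs m (h - 1) (insert None (branch i S))"
  by (rule pd_obs_inf_mono) auto

lemma closed_nbhd_branch_subset_obs:
  "closed_nbhd (tverts m (h - 1)) (tadj m (h - 1)) (branch i S - {None}) \<subseteq> obs m (h - 1) (branch i S)"
  using closed_nbhd_subset_pd_obs_inf by simp

lemma closed_nbhd_branch_subset_tverts:
  "i < m \<Longrightarrow> closed_nbhd (tverts m (h - 1)) (tadj m (h - 1)) (branch i S - {None}) \<subseteq> tverts m (h - 1)"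
  using closed_nbhd_branch_subset_obs obs_branch_subset_tverts by blast

lemma stem_in_obs_insert_stem: "None \<in> obs m h (insert None S)"
  by (rule pd_obs_inf_memI) simp

lemma root_in_obs_insert_stem: "Some [] \<in> obs m h (insert None S)"
  by (rule pd_obs_inf_neighbourI[of None]) (simp_all add: tadj_stem_left)

lemma dominates_insert_stem: "dominates m h S \<Longrightarrow> dominates m h (insert None S)"
  using pd_obs_inf_mono[of "tverts m h" S "insert None S" "tadj m h"]
    obs_subset_tverts[OF insert_stem_subset_tverts] by auto

lemma pullback_if_branch_dominates:
  assumes "T = S \<or> T = insert None S" "i < m" "dominates m (h - 1) (branch i S)"
  shows "tverts m (h - 1) \<subseteq> pullback m h (obs m h T) i" "Some [] \<in> obs m h T" "Some [i] \<in> obs m h T"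
proof -
  have "T \<subseteq> tverts m h" "branch i T = branch i S"
    using assms(1) S by auto
  then show pb: "tverts m (h - 1) \<subseteq> pullback m h (obs m h T) i"
    using obs_branch_subset_pullback[OF h assms(2), of T] assms(3) by simp
  show "Some [] \<in> obs m h T"
    using stem_in_pullbackD[OF subsetD[OF pb tverts_None]] by simp
  show "Some [i] \<in> obs m h T"
    using child_in_pullbackD[OF subsetD[OF pb tverts_root]] .
qed

lemma branch_dominates_with_stem:
  assumes dom: "dominates m h (insert None S)" and i: "i < m"
  shows "dominates m (h - 1) (insert None (branch i S))"
proof (rule ccontr)
  let ?O = "obs m (h - 1) (insert None (branch i S))"
  assume "\<not> dominates m (h - 1) (insert None (branch i S))"
  moreover have "?O \<subseteq> tverts m (h - 1)"
    using branch_subset_tverts[OF S h i] by (intro obs_subset_tverts) simp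
  ultimately obtain y where y: "y \<in> tverts m (h - 1)" "y \<notin> ?O"
    by blast
  have "None \<in> ?O"
    by (rule pd_obs_inf_memI) simp
  then have "y \<noteq> None"
    using y(2) by metis
  define Cs where "Cs = (\<lambda>j. if j = i then ?O else tverts m (h - 1))"
  have root_Cs: "Some [] \<in> Cs j" for j
    unfolding Cs_def using pd_obs_inf_neighbourI[of None "insert None (branch i S)" "Some []"]
    by (simp add: tadj_stem_left)
  have "obs m h (insert None S) \<subseteq> glue m True True Cs"
    unfolding glue_branches_insert_stem[symmetric]
  proof (rule obs_glue_subset[OF h])
    show "None \<in> Cs j \<longleftrightarrow> True" for j
      unfolding Cs_def using \<open>None \<in> ?O\<close> by simp
    show "cannot_force (tverts m h) (tadj m h) (glue m True True Cs) (Some [])"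
      by (rule cannot_force_if_neighbours_in) (auto simp: tadj_root child_in_glue_iff root_Cs)
    show "cannot_force (tverts m (h - 1)) (tadj m (h - 1)) (Cs j) y" if "y \<in> Cs j" for j y
      using that by (cases "j = i") (simp_all add: Cs_def cannot_force_obs cannot_force_tverts)
    show "closed_nbhd (tverts m (h - 1)) (tadj m (h - 1)) (branch j S - {None}) \<subseteq> Cs j"
      if "j < m" for j
      using closed_nbhd_branch_subset_obs[of j] obs_branch_subset_obs_insert_stem[of j]
        closed_nbhd_branch_subset_tverts[OF that] by (auto simp: Cs_def)
  qed (use root_Cs in simp_all)
  moreover have "lift i y \<notin> glue m True True Cs"
    using y(2) lift_in_glue_iff[OF i \<open>y \<noteq> None\<close>] by (simp add: Cs_def)
  moreover have "lift i y \<in> tverts m h"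
    using y(1) lift_in_tverts_iff[OF h i] by simp
  ultimately show False
    using dom by blast
qed

lemma dominates_if_root_in:
  assumes root: "Some [] \<in> S"
    and with_stem: "\<And>i. i < m \<Longrightarrow> dominates m (h - 1) (insert None (branch i S))"
  shows "dominates m h S"
proof -
  have "Some [] \<in> obs m h S"
    using root by (rule pd_obs_inf_memI)
  moreover have "None \<in> obs m h S"
    using root by (rule pd_obs_inf_neighbourI) (simp_all add: tadj_root)
  moreover have children: "Some [i] \<in> obs m h S" if "i < m" for i
    using root by (rule pd_obs_inf_neighbourI) (use h that in \<open>simp_all add: tadj_root tverts_child\<close>)
  ultimately show ?thesis
    using h S obs_insert_stem_branch_subset_pullback[OF h _ S] with_stem children
    by (intro dominates_if_pullbacks) auto
qed

lemma dominates_if_branches_dominate: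
  assumes "0 < m" and branches: "\<And>i. i < m \<Longrightarrow> dominates m (h - 1) (branch i S)"
  shows "dominates m h S"
proof -
  have pb: "tverts m (h - 1) \<subseteq> pullback m h (obs m h S) i" "Some [] \<in> obs m h S"
    "Some [i] \<in> obs m h S" if "i < m" for i
    using pullback_if_branch_dominates[of S i] branches[OF that] that by simp_all
  have "Some [] \<in> obs m h S"
    using pb(2) assms(1) by blast
  moreover have "None \<in> obs m h S"
    using \<open>Some [] \<in> obs m h S\<close> pb(3) by (rule stem_in_obs_if_root_neighbours)
  ultimately show ?thesis
    using pb(1) by (intro dominates_if_pullbacks[OF h S])
qed

text \<open>If the observation of branch \<open>j\<close> misses its root \<open>r\<^sub>j\<close>, then \<open>r\<^sub>j\<close> stays unobserved in
  the whole tree even when \<open>r\<close> is observed: nothing inside the branch forces it, and \<open>r\<close> is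
  blocked by a second unobserved neighbour.\<close>

lemma obs_subset_glue_deficient:
  fixes I :: "nat set"
  defines "Cs \<equiv> \<lambda>j. if j \<in> I then insert None (obs m (h - 1) (branch j S)) else tverts m (h - 1)"
  assumes root: "Some [] \<notin> S"
    and deficient: "\<And>j. j \<in> I \<Longrightarrow> Some [] \<notin> obs m (h - 1) (branch j S)"
    and stuck: "cannot_force (tverts m h) (tadj m h) (glue m True with_stem Cs) (Some [])"
  shows "obs m h (glue m False with_stem (\<lambda>i. branch i S)) \<subseteq> glue m True with_stem Cs"
proof (rule obs_glue_subset[OF h])
  show "cannot_force (tverts m (h - 1)) (tadj m (h - 1)) (Cs j) y"
    if "y \<in> Cs j" "y \<noteq> None" for j y
  proof (cases "j \<in> I")
    case True
    then have "y \<in> obs m (h - 1) (branch j S)" "y \<noteq> Some []"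
      using that deficient by (auto simp: Cs_def)
    then show ?thesis
      using True by (simp add: Cs_def cannot_force_insert_stem_obs)
  qed (simp add: Cs_def cannot_force_tverts)
  show "closed_nbhd (tverts m (h - 1)) (tadj m (h - 1)) (branch j S - {None}) \<subseteq> Cs j"
    if "j < m" for j
    using closed_nbhd_branch_subset_obs[of j] closed_nbhd_branch_subset_tverts[OF that]
    by (cases "j \<in> I") (auto simp: Cs_def)
qed (use stuck in \<open>simp_all add: Cs_def\<close>)

lemma glue_branches_stemless: "Some [] \<notin> S \<Longrightarrow> glue m False False (\<lambda>i. branch i S) = S"
  using glue_branches by simp

lemma glue_branches_insert_stem_stemless:
  "Some [] \<notin> S \<Longrightarrow> glue m False True (\<lambda>i. branch i S) = insert None S"
  using glue_branches_insert_stem by simp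

lemma obs_one_deficient_branch:
  assumes m: "2 \<le> m" and root: "Some [] \<notin> S" and i: "i < m"
    and deficient: "Some [] \<notin> obs m (h - 1) (branch i S)"
    and with_stem: "dominates m (h - 1) (insert None (branch i S))"
    and others: "\<And>j. \<lbrakk>j < m; j \<noteq> i\<rbrakk> \<Longrightarrow> dominates m (h - 1) (branch j S)"
  shows "dominates m h (insert None S)" "None \<notin> obs m h S" "Some [] \<in> obs m h S"
    "Some [i] \<notin> obs m h S" "\<And>j. \<lbrakk>j < m; j \<noteq> i\<rbrakk> \<Longrightarrow> Some [j] \<in> obs m h S"
proof -
  let ?X = "glue m True False (\<lambda>j. if j \<in> {i} then insert None (obs m (h - 1) (branch j S)) else tverts m (h - 1))"
  have "Some [i] \<notin> ?X"
    using deficient child_in_glue_iff[OF i] by simp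
  then have "cannot_force (tverts m h) (tadj m h) ?X (Some [])"
    using h i by (intro cannot_force_if_two_neighbours_out[of None "Some [i]"]) (simp_all add: tadj_root tverts_child)
  then have "obs m h (glue m False False (\<lambda>i. branch i S)) \<subseteq> ?X"
    using deficient by (intro obs_subset_glue_deficient[OF root]) auto
  then have "obs m h S \<subseteq> ?X"
    by (simp only: glue_branches_stemless[OF root])
  then show "None \<notin> obs m h S" "Some [i] \<notin> obs m h S"
    using \<open>Some [i] \<notin> ?X\<close> by auto
  obtain j0 where j0: "j0 < m" "j0 \<noteq> i"
  proof
    show "(if i = 0 then 1 else 0) < m" "(if i = 0 then 1 else 0) \<noteq> i"
      using m by simp_all
  qed
  show "Some [] \<in> obs m h S"
    using pullback_if_branch_dominates(2)[of S j0] others[OF j0] j0(1) by simp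
  show "Some [j] \<in> obs m h S" if "j < m" "j \<noteq> i" for j
    using pullback_if_branch_dominates(3)[of S j] others[OF that] that(1) by simp
  let ?T = "insert None S"
  have others_pb: "tverts m (h - 1) \<subseteq> pullback m h (obs m h ?T) j"
    "Some [j] \<in> obs m h ?T" if "j < m" "j \<noteq> i" for j
    using pullback_if_branch_dominates[of ?T j] others[OF that] that(1) by simp_all
  have "Some [i] \<in> obs m h ?T"
    using child_in_obs_if_root_neighbours[OF h i root_in_obs_insert_stem stem_in_obs_insert_stem]
      others_pb(2) by blast
  then have "tverts m (h - 1) \<subseteq> pullback m h (obs m h ?T) i"
    using obs_insert_stem_branch_subset_pullback[OF h i insert_stem_subset_tverts root_in_obs_insert_stem]
      with_stem by simp
  then have "tverts m (h - 1) \<subseteq> pullback m h (obs m h ?T) j" if "j < m" for j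
    using others_pb(1)[OF that] by (cases "j = i") simp_all
  then show "dominates m h ?T"
    by (rule dominates_if_pullbacks[OF h insert_stem_subset_tverts stem_in_obs_insert_stem
          root_in_obs_insert_stem])
qed

lemma not_dominates_two_deficient_branches:
  assumes root: "Some [] \<notin> S" and i: "i < m" "i' < m" "i \<noteq> i'"
    and deficient: "Some [] \<notin> obs m (h - 1) (branch i S)" "Some [] \<notin> obs m (h - 1) (branch i' S)"
  shows "\<not> dominates m h (insert None S)"
proof
  let ?X = "glue m True True (\<lambda>j. if j \<in> {i, i'} then insert None (obs m (h - 1) (branch j S)) else tverts m (h - 1))"
  have out: "Some [i] \<notin> ?X" "Some [i'] \<notin> ?X"
    using deficient child_in_glue_iff[OF i(1)] child_in_glue_iff[OF i(2)] by simp_all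
  then have "cannot_force (tverts m h) (tadj m h) ?X (Some [])"
    using h i by (intro cannot_force_if_two_neighbours_out[of "Some [i]" "Some [i']"])
      (simp_all add: tadj_root tverts_child)
  then have "obs m h (glue m False True (\<lambda>i. branch i S)) \<subseteq> ?X"
    using deficient by (intro obs_subset_glue_deficient[OF root]) auto
  then have "obs m h (insert None S) \<subseteq> ?X"
    by (simp only: glue_branches_insert_stem_stemless[OF root])
  moreover assume "dominates m h (insert None S)"
  ultimately show False
    using out(1) tverts_child[OF h i(1)] by blast
qed

lemma dominates_if_roots_observed:
  assumes with_stem: "\<And>i. i < m \<Longrightarrow> dominates m (h - 1) (insert None (branch i S))"
    and roots: "\<And>i. i < m \<Longrightarrow> Some [] \<in> obs m (h - 1) (branch i S)"
    and j: "j < m" "dominates m (h - 1) (branch j S)"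
  shows "dominates m h S"
proof -
  have root: "Some [] \<in> obs m h S"
    using pullback_if_branch_dominates(2)[of S j] j by simp
  have children: "Some [i] \<in> obs m h S" if "i < m" for i
    using obs_branch_subset_pullback[OF h that S] roots[OF that] child_in_pullbackD by blast
  have stem: "None \<in> obs m h S"
    using root children by (rule stem_in_obs_if_root_neighbours)
  have "tverts m (h - 1) \<subseteq> pullback m h (obs m h S) i" if "i < m" for i
    using obs_insert_stem_branch_subset_pullback[OF h that S root children[OF that]] with_stem[OF that]
    by simp
  then show ?thesis
    by (rule dominates_if_pullbacks[OF h S stem root])
qed

lemma obs_all_deficient_branches:
  assumes root: "Some [] \<notin> S"
    and with_stem: "\<And>i. i < m \<Longrightarrow> dominates m (h - 1) (insert None (branch i S))"
    and stems: "\<And>i. i < m \<Longrightarrow> None \<notin> obs m (h - 1) (branch i S)"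
    and roots: "\<And>i. i < m \<Longrightarrow> Some [] \<in> obs m (h - 1) (branch i S)"
  shows "dominates m h (insert None S)" "None \<notin> obs m h S" "Some [] \<notin> obs m h S"
    "\<And>j. j < m \<Longrightarrow> Some [j] \<in> obs m h S"
proof -
  have "obs m h (glue m False False (\<lambda>i. branch i S)) \<subseteq> glue m False False (\<lambda>j. obs m (h - 1) (branch j S))"
  proof (rule obs_glue_subset[OF h])
    show "None \<in> obs m (h - 1) (branch j S) \<longleftrightarrow> False" if "j < m" for j
      using stems[OF that] by simp
    show "cannot_force (tverts m (h - 1)) (tadj m (h - 1)) (obs m (h - 1) (branch j S)) y"
      if "y \<in> obs m (h - 1) (branch j S)" for j y
      using that by (rule cannot_force_obs)
  qed (use closed_nbhd_branch_subset_obs in simp_all)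
  then show "None \<notin> obs m h S" "Some [] \<notin> obs m h S"
    unfolding glue_branches_stemless[OF root] by auto
  show children: "Some [j] \<in> obs m h S" if "j < m" for j
    using obs_branch_subset_pullback[OF h that S] roots[OF that] child_in_pullbackD by blast
  have "Some [j] \<in> obs m h (insert None S)" if "j < m" for j
    using obs_branch_subset_pullback[OF h that insert_stem_subset_tverts] roots[OF that]
      child_in_pullbackD[of m h _ j] by auto
  then have "tverts m (h - 1) \<subseteq> pullback m h (obs m h (insert None S)) j" if "j < m" for j
    using obs_insert_stem_branch_subset_pullback[OF h that insert_stem_subset_tverts root_in_obs_insert_stem]
      with_stem[OF that] that by simp
  then show "dominates m h (insert None S)"
    by (rule dominates_if_pullbacks[OF h insert_stem_subset_tverts stem_in_obs_insert_stem
          root_in_obs_insert_stem])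
qed

end

section \<open>Type I and Type II sets through their branches\<close>

lemma typeI_iff_dominates: "typeI m h S \<longleftrightarrow> S \<subseteq> tverts m h - {None} \<and> dominates m h S"
  unfolding typeI_def power_dominating_def by blast

lemma typeII_iff_dominates:
  "typeII m h S \<longleftrightarrow> S \<subseteq> tverts m h - {None} \<and> \<not> dominates m h S \<and> dominates m h (insert None S)"
  unfolding typeII_def power_dominating_def by auto

lemma not_typeI_and_typeII: "\<not> (typeI m h S \<and> typeII m h S)"
  by (simp add: typeI_iff_dominates typeII_iff_dominates)

lemma card_Collect_less_eq_iff: "card {i. i < m \<and> P i} = m \<longleftrightarrow> (\<forall>i<m. P i)"
proof
  assume "card {i. i < m \<and> P i} = m"
  then have "{i. i < m \<and> P i} = {..<m}"
    by (intro card_subset_eq) auto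
  then show "\<forall>i<m. P i"
    by blast
next
  assume "\<forall>i<m. P i"
  then have "{i. i < m \<and> P i} = {..<m}"
    by auto
  then show "card {i. i < m \<and> P i} = m"
    by simp
qed

lemma card_Collect_less_less_iff: "card {i. i < m \<and> P i} < m \<longleftrightarrow> (\<exists>i<m. \<not> P i)"
proof -
  have "card {i. i < m \<and> P i} \<le> m"
    using card_mono[of "{..<m}" "{i. i < m \<and> P i}"] by auto
  then have "card {i. i < m \<and> P i} < m \<longleftrightarrow> card {i. i < m \<and> P i} \<noteq> m"
    by linarith
  then show ?thesis
    using card_Collect_less_eq_iff[of m P] by blast
qed

lemma closed_nbhd_root:
  "1 \<le> h \<Longrightarrow> closed_nbhd (tverts m h) (tadj m h) {Some []} = {None, Some []} \<union> {Some [j] | j. j < m}"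
  by (auto simp: closed_nbhd_def tadj_root tverts_Some)

text \<open>The classification at height \<open>h\<close> uses, at height \<open>h - 1\<close>, the fact that a Type II set observes
  its root exactly at odd heights; that fact is then proved by induction with this classification.\<close>

context
  fixes m h :: nat and S :: "nat list option set"
  assumes h: "1 \<le> h" and m: "2 \<le> m" and S: "S \<subseteq> tverts m h - {None}"
    and typeII_below: "\<And>T. typeII m (h - 1) T \<Longrightarrow>
      None \<notin> obs m (h - 1) T \<and> (Some [] \<in> obs m (h - 1) T \<longleftrightarrow> odd (h - 1))"
begin

lemma S_subset_tverts: "S \<subseteq> tverts m h"
  using S by blast

lemma stem_notin_S: "None \<notin> S"
  using S by blast

lemma branch_typeI_iff: "i < m \<Longrightarrow> typeI m (h - 1) (branch i S) \<longleftrightarrow> dominates m (h - 1) (branch i S)"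
  using branch_subset_tverts[OF S_subset_tverts h] by (simp add: typeI_iff_dominates subset_Diff_insert)

lemma branch_typeII_iff:
  "i < m \<Longrightarrow> typeII m (h - 1) (branch i S) \<longleftrightarrow>
     \<not> dominates m (h - 1) (branch i S) \<and> dominates m (h - 1) (insert None (branch i S))"
  using branch_subset_tverts[OF S_subset_tverts h] by (simp add: typeII_iff_dominates subset_Diff_insert)

lemma branch_typeI_or_typeII_iff:
  assumes "i < m"
  shows "typeI m (h - 1) (branch i S) \<or> typeII m (h - 1) (branch i S) \<longleftrightarrow>
    dominates m (h - 1) (insert None (branch i S))"
proof -
  have "obs m (h - 1) (insert None (branch i S)) \<subseteq> tverts m (h - 1)"
    using branch_subset_tverts[OF S_subset_tverts h assms] by (intro obs_subset_tverts) simp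
  then show ?thesis
    using obs_branch_subset_obs_insert_stem[OF h S_subset_tverts stem_notin_S, of i]
      branch_typeI_iff[OF assms] branch_typeII_iff[OF assms] by auto
qed

lemma typeII_branch_obs:
  assumes "typeII m (h - 1) (branch i S)"
  shows "None \<notin> obs m (h - 1) (branch i S)" "Some [] \<in> obs m (h - 1) (branch i S) \<longleftrightarrow> even h"
proof -
  have "odd (h - 1) \<longleftrightarrow> even h"
    using h by (cases h) auto
  then show "None \<notin> obs m (h - 1) (branch i S)" "Some [] \<in> obs m (h - 1) (branch i S) \<longleftrightarrow> even h"
    using typeII_below[OF assms] by simp_all
qed

lemma odd_height_classification:
  assumes odd: "odd h" and root: "Some [] \<notin> S"
    and with_stem: "\<And>i. i < m \<Longrightarrow> dominates m (h - 1) (insert None (branch i S))"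
  defines "D \<equiv> {i. i < m \<and> typeII m (h - 1) (branch i S)}"
  shows "typeI m h S \<longleftrightarrow> card D = 0" "typeII m h S \<longleftrightarrow> card D = 1"
proof -
  have D_iff: "i \<in> D \<longleftrightarrow> i < m \<and> \<not> dominates m (h - 1) (branch i S)" for i
    unfolding D_def using branch_typeII_iff with_stem by blast
  have D_root: "Some [] \<notin> obs m (h - 1) (branch i S)" if "i \<in> D" for i
    using typeII_branch_obs(2)[of i] odd that unfolding D_def by blast
  have "finite D"
    unfolding D_def by simp
  note types = typeI_iff_dominates[of m h S] typeII_iff_dominates[of m h S]
  consider "D = {}" | i where "D = {i}" | i i' where "i \<in> D" "i' \<in> D" "i \<noteq> i'"
    by blast
  then have "(typeI m h S \<longleftrightarrow> card D = 0) \<and> (typeII m h S \<longleftrightarrow> card D = 1)"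
  proof cases
    case 1
    then have "dominates m h S"
      using m D_iff by (intro dominates_if_branches_dominate[OF h S_subset_tverts stem_notin_S]) auto
    with 1 show ?thesis
      using S types by simp
  next
    case (2 i)
    then have i: "i < m" "\<not> dominates m (h - 1) (branch i S)"
      using D_iff by blast+
    have "dominates m (h - 1) (branch j S)" if "j < m" "j \<noteq> i" for j
      using 2 D_iff that by blast
    note obs_S = obs_one_deficient_branch[OF h S_subset_tverts stem_notin_S m root i(1)
        D_root[unfolded 2] with_stem[OF i(1)] this]
    then show ?thesis
      using S 2 types by auto
  next
    case (3 i i')
    then have "\<not> dominates m h (insert None S)"
      using D_root D_iff
      by (intro not_dominates_two_deficient_branches[OF h S_subset_tverts stem_notin_S root]) auto
    moreover have "card D \<ge> 2"
      using card_mono[OF \<open>finite D\<close>, of "{i, i'}"] 3 by simp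
    ultimately show ?thesis
      using types dominates_insert_stem[OF h S_subset_tverts stem_notin_S] by auto
  qed
  then show "typeI m h S \<longleftrightarrow> card D = 0" "typeII m h S \<longleftrightarrow> card D = 1"
    by blast+
qed

lemma even_height_classification:
  assumes even: "even h" and root: "Some [] \<notin> S"
    and with_stem: "\<And>i. i < m \<Longrightarrow> dominates m (h - 1) (insert None (branch i S))"
  defines "D \<equiv> {i. i < m \<and> typeII m (h - 1) (branch i S)}"
  shows "typeI m h S \<longleftrightarrow> card D < m" "typeII m h S \<longleftrightarrow> card D = m"
proof -
  have deficient: "typeII m (h - 1) (branch i S) \<longleftrightarrow> \<not> dominates m (h - 1) (branch i S)" if "i < m" for i
    using branch_typeII_iff[OF that] with_stem[OF that] by blast
  have roots: "Some [] \<in> obs m (h - 1) (branch i S)" if "i < m" for i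
    using typeII_branch_obs(2)[of i] even deficient[OF that] by auto
  note types = typeI_iff_dominates[of m h S] typeII_iff_dominates[of m h S]
  have "(typeI m h S \<longleftrightarrow> card D < m) \<and> (typeII m h S \<longleftrightarrow> card D = m)"
  proof (cases "\<forall>i<m. typeII m (h - 1) (branch i S)")
    case True
    then have "\<not> dominates m h S" "dominates m h (insert None S)"
      using obs_all_deficient_branches[OF h S_subset_tverts stem_notin_S root with_stem
          typeII_branch_obs(1) roots] by auto
    moreover have "card D = m"
      using True card_Collect_less_eq_iff[of m "\<lambda>i. typeII m (h - 1) (branch i S)"] unfolding D_def by blast
    ultimately show ?thesis
      using S types by simp
  next
    case False
    then obtain j where "j < m" "dominates m (h - 1) (branch j S)"
      using deficient by blast
    then have "dominates m h S"
      using dominates_if_roots_observed[OF h S_subset_tverts stem_notin_S with_stem roots] by blast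
    moreover have "card D < m"
      using False card_Collect_less_less_iff[of m "\<lambda>i. typeII m (h - 1) (branch i S)"] unfolding D_def by blast
    ultimately show ?thesis
      using S types dominates_insert_stem[OF h S_subset_tverts stem_notin_S] by simp
  qed
  then show "typeI m h S \<longleftrightarrow> card D < m" "typeII m h S \<longleftrightarrow> card D = m"
    by blast+
qed

lemma branches_dominate_with_stem:
  assumes "typeI m h S \<or> typeII m h S" "i < m"
  shows "dominates m (h - 1) (insert None (branch i S))"
  using assms dominates_insert_stem[OF h S_subset_tverts stem_notin_S]
    branch_dominates_with_stem[OF h S_subset_tverts stem_notin_S]
  by (auto simp: typeI_iff_dominates typeII_iff_dominates)

lemma typeI_iff_branches:
  "typeI m h S \<longleftrightarrow> (\<forall>i<m. typeI m (h - 1) (branch i S) \<or> typeII m (h - 1) (branch i S)) \<and>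
     (Some [] \<in> S \<or> (if odd h then card {i. i < m \<and> typeII m (h - 1) (branch i S)} = 0
                       else card {i. i < m \<and> typeII m (h - 1) (branch i S)} < m))"
proof (cases "\<forall>i<m. dominates m (h - 1) (insert None (branch i S))")
  case False
  then show ?thesis
    using branches_dominate_with_stem branch_typeI_or_typeII_iff by blast
next
  case True
  then have "\<forall>i<m. typeI m (h - 1) (branch i S) \<or> typeII m (h - 1) (branch i S)"
    using branch_typeI_or_typeII_iff by blast
  moreover have "typeI m h S" if "Some [] \<in> S"
    using dominates_if_root_in[OF h S_subset_tverts stem_notin_S that] True S
    by (simp add: typeI_iff_dominates)
  ultimately show ?thesis
    using odd_height_classification(1) even_height_classification(1) True by auto
qed

lemma typeII_iff_branches:
  "typeII m h S \<longleftrightarrow> (\<forall>i<m. typeI m (h - 1) (branch i S) \<or> typeII m (h - 1) (branch i S)) \<and>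
     Some [] \<notin> S \<and> card {i. i < m \<and> typeII m (h - 1) (branch i S)} = (if odd h then 1 else m)"
proof (cases "\<forall>i<m. dominates m (h - 1) (insert None (branch i S))")
  case False
  then show ?thesis
    using branches_dominate_with_stem branch_typeI_or_typeII_iff by blast
next
  case True
  then have "\<forall>i<m. typeI m (h - 1) (branch i S) \<or> typeII m (h - 1) (branch i S)"
    using branch_typeI_or_typeII_iff by blast
  moreover have "\<not> typeII m h S" if "Some [] \<in> S"
    using dominates_if_root_in[OF h S_subset_tverts stem_notin_S that] True
    by (simp add: typeII_iff_dominates)
  ultimately show ?thesis
    using odd_height_classification(2) even_height_classification(2) True by auto
qed

lemma typeII_closed_nbhd_root:
  assumes "typeII m h S"
  shows "if odd h then \<exists>i<m. closed_nbhd (tverts m h) (tadj m h) {Some []} - obs m h S = {None, Some [i]}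
         else closed_nbhd (tverts m h) (tadj m h) {Some []} - obs m h S = {None, Some []}"
proof -
  let ?D = "{i. i < m \<and> typeII m (h - 1) (branch i S)}"
  have branches: "\<forall>i<m. typeI m (h - 1) (branch i S) \<or> typeII m (h - 1) (branch i S)"
    and root: "Some [] \<notin> S" and card_D: "card ?D = (if odd h then 1 else m)"
    using assms typeII_iff_branches by blast+
  note with_stem = branches_dominate_with_stem[OF disjI2[OF assms]]
  show ?thesis
  proof (cases "odd h")
    case True
    with card_D have "card ?D = 1"
      by simp
    then obtain i where D: "?D = {i}"
      by (rule card_1_singletonE)
    then have i: "i < m" "typeII m (h - 1) (branch i S)"
      by auto
    have "dominates m (h - 1) (branch j S)" if "j < m" "j \<noteq> i" for j
      using branches D that branch_typeI_iff by blast
    note obs_S = obs_one_deficient_branch[OF h S_subset_tverts stem_notin_S m root i(1)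
        _ with_stem[OF i(1)] this]
    have "closed_nbhd (tverts m h) (tadj m h) {Some []} - obs m h S = {None, Some [i]}"
      using obs_S(2-5) typeII_branch_obs(2)[OF i(2)] True i(1) unfolding closed_nbhd_root[OF h] by auto
    then show ?thesis
      using True i(1) by auto
  next
    case False
    with card_D have "\<forall>i<m. typeII m (h - 1) (branch i S)"
      using card_Collect_less_eq_iff[of m "\<lambda>i. typeII m (h - 1) (branch i S)"] by simp
    then have "\<forall>i<m. None \<notin> obs m (h - 1) (branch i S) \<and> Some [] \<in> obs m (h - 1) (branch i S)"
      using typeII_branch_obs False by blast
    note obs_S = obs_all_deficient_branches[OF h S_subset_tverts stem_notin_S root with_stem]
    have "closed_nbhd (tverts m h) (tadj m h) {Some []} - obs m h S = {None, Some []}"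
      using obs_S(2-4) \<open>\<forall>i<m. _ \<and> _\<close> unfolding closed_nbhd_root[OF h] by auto
    then show ?thesis
      using False by simp
  qed
qed

end

lemma typeII_height_0_obs:
  assumes "typeII m 0 T"
  shows "None \<notin> obs m 0 T \<and> Some [] \<notin> obs m 0 T"
proof -
  have V: "tverts m 0 = {None, Some []}"
    by (auto simp: tverts_def)
  then have "T = {} \<or> T = {Some []}" "\<not> dominates m 0 T"
    using assms by (auto simp: typeII_iff_dominates)
  moreover have "dominates m 0 {Some []}"
  proof (rule antisym)
    show "obs m 0 {Some []} \<subseteq> tverts m 0"
      by (rule obs_subset_tverts) simp
    have "None \<in> obs m 0 {Some []}"
      by (rule pd_obs_inf_neighbourI) (simp_all add: tadj_stem_right)
    then show "tverts m 0 \<subseteq> obs m 0 {Some []}"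
      using V pd_obs_inf_memI[of "Some []" "{Some []}"] by auto
  qed
  moreover have "obs m 0 {} = {}"
    using pd_obs_inf_least[of "tverts m 0" "tadj m 0" "{}" "{}"]
    by (auto simp: closed_nbhd_def forced_def)
  ultimately show ?thesis
    by auto
qed

lemma typeII_obs_stem_root:
  assumes m: "2 \<le> m"
  shows "typeII m h T \<Longrightarrow> None \<notin> obs m h T \<and> (Some [] \<in> obs m h T \<longleftrightarrow> odd h)"
proof (induction h arbitrary: T)
  case 0
  then show ?case
    using typeII_height_0_obs by simp
next
  case (Suc h)
  have "T \<subseteq> tverts m (Suc h) - {None}"
    using Suc.prems by (simp add: typeII_iff_dominates)
  from typeII_closed_nbhd_root[OF _ m this _ Suc.prems] Suc.IH
  have shape: "if odd (Suc h)
      then \<exists>i<m. closed_nbhd (tverts m (Suc h)) (tadj m (Suc h)) {Some []} - obs m (Suc h) T = {None, Some [i]}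
      else closed_nbhd (tverts m (Suc h)) (tadj m (Suc h)) {Some []} - obs m (Suc h) T = {None, Some []}"
    by simp
  have "None \<in> closed_nbhd (tverts m (Suc h)) (tadj m (Suc h)) {Some []}"
    "Some [] \<in> closed_nbhd (tverts m (Suc h)) (tadj m (Suc h)) {Some []}"
    by (simp_all add: closed_nbhd_root)
  then show ?case
    using shape by (cases "odd (Suc h)") auto
qed

section \<open>Counting lists by their entries\<close>

definition weak_compositions :: "nat \<Rightarrow> nat \<Rightarrow> nat list set" where
  "weak_compositions n k = {zs. length zs = n \<and> sum_list zs = k}"

lemma finite_weak_compositions [simp]: "finite (weak_compositions n k)"
proof (rule finite_subset)
  show "weak_compositions n k \<subseteq> {zs. set zs \<subseteq> {..k} \<and> length zs = n}"
    unfolding weak_compositions_def using member_le_sum_list by fastforce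
  show "finite {zs. set zs \<subseteq> {..k} \<and> length zs = n}"
    by (rule finite_lists_length_eq) simp
qed

lemma weak_compositions_0: "weak_compositions 0 k = (if k = 0 then {[]} else {})"
  by (auto simp: weak_compositions_def)

lemma weak_compositions_Suc:
  "weak_compositions (Suc n) k = (\<Union>j\<le>k. (#) j ` weak_compositions n (k - j))"
proof (rule set_eqI)
  fix zs
  show "zs \<in> weak_compositions (Suc n) k \<longleftrightarrow> zs \<in> (\<Union>j\<le>k. (#) j ` weak_compositions n (k - j))"
  proof
    assume "zs \<in> weak_compositions (Suc n) k"
    then obtain j ws where "zs = j # ws" "length ws = n" "j + sum_list ws = k"
      unfolding weak_compositions_def by (cases zs) auto
    then show "zs \<in> (\<Union>j\<le>k. (#) j ` weak_compositions n (k - j))"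
      unfolding weak_compositions_def by (intro UN_I[of j]) (auto intro!: image_eqI[of _ _ ws])
  qed (auto simp: weak_compositions_def)
qed

lemma sum_weak_compositions_Suc:
  "(\<Sum>zs\<in>weak_compositions (Suc n) k. (F zs :: 'a :: comm_monoid_add)) =
    (\<Sum>j\<le>k. \<Sum>ws\<in>weak_compositions n (k - j). F (j # ws))"
proof -
  have "(\<Sum>zs\<in>weak_compositions (Suc n) k. F zs) = (\<Sum>j\<le>k. \<Sum>zs\<in>(#) j ` weak_compositions n (k - j). F zs)"
    unfolding weak_compositions_Suc by (rule sum.UNION_disjoint) auto
  also have "\<dots> = (\<Sum>j\<le>k. \<Sum>ws\<in>weak_compositions n (k - j). F (j # ws))"
    by (rule sum.cong[OF refl]) (simp add: sum.reindex)
  finally show ?thesis .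
qed

lemma sum_weak_compositions_eq_fps_nth:
  "(\<Sum>zs\<in>weak_compositions (a + b) k. prod_list (map f (take a zs)) * prod_list (map g (drop a zs))) =
    (Abs_fps f ^ a * Abs_fps g ^ b) $ k"
proof (induction a arbitrary: k)
  case 0
  show ?case
  proof (induction b arbitrary: k)
    case 0
    then show ?case
      by (simp add: weak_compositions_0)
  next
    case (Suc b)
    have "(\<Sum>zs\<in>weak_compositions (Suc b) k. prod_list (map g zs)) =
        (\<Sum>j\<le>k. g j * (\<Sum>ws\<in>weak_compositions b (k - j). prod_list (map g ws)))"
      by (simp add: sum_weak_compositions_Suc sum_distrib_left)
    also have "\<dots> = (Abs_fps g * Abs_fps g ^ b) $ k"
      using Suc by (simp add: fps_mult_nth atLeast0AtMost)
    finally show ?case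
      by simp
  qed
next
  case (Suc a)
  have "(\<Sum>zs\<in>weak_compositions (Suc a + b) k. prod_list (map f (take (Suc a) zs)) * prod_list (map g (drop (Suc a) zs)))
      = (\<Sum>j\<le>k. f j * (\<Sum>ws\<in>weak_compositions (a + b) (k - j).
          prod_list (map f (take a ws)) * prod_list (map g (drop a ws))))"
    by (simp add: sum_weak_compositions_Suc sum_distrib_left mult.assoc)
  also have "\<dots> = (Abs_fps f * (Abs_fps f ^ a * Abs_fps g ^ b)) $ k"
    by (simp add: Suc fps_mult_nth atLeast0AtMost)
  finally show ?case
    by (simp add: mult.assoc)
qed

definition sort_blocks :: "nat \<Rightarrow> nat list \<Rightarrow> nat list" where
  "sort_blocks l zs = sort (take l zs) @ sort (drop l zs)"

definition sorted_blocks :: "nat \<Rightarrow> nat \<Rightarrow> nat \<Rightarrow> nat list set" where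
  "sorted_blocks m l k = {xs. length xs = m \<and> sorted (take l xs) \<and> sorted (drop l xs) \<and> sum_list xs = k}"

definition block_perms :: "nat \<Rightarrow> nat list \<Rightarrow> nat list set" where
  "block_perms l y = {zs. length zs = length y \<and> mset (take l zs) = mset (take l y) \<and> mset (drop l zs) = mset (drop l y)}"

lemma multinom_eq_card_permutations_of_multiset:
  assumes "sum_list xs \<le> k"
  shows "multinom (length xs) (count_list xs) k = card (permutations_of_multiset (mset xs))"
proof -
  have sub: "set_mset (mset xs) \<subseteq> {..k}"
    using assms member_le_sum_list by fastforce
  have "(\<Prod>x\<in>set_mset (mset xs). fact (count (mset xs) x) :: nat) = (\<Prod>x\<in>set_mset (mset xs). fact (count_list xs x))"
    by (simp add: count_mset)
  also have "\<dots> = (\<Prod>\<alpha>\<le>k. fact (count_list xs \<alpha>))"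
    by (rule prod.mono_neutral_left) (use sub in auto)
  finally show ?thesis
    unfolding multinom_def card_permutations_of_multiset(1) by simp
qed

lemma card_block_perms:
  assumes "l \<le> length y"
  shows "card (block_perms l y) =
    card (permutations_of_multiset (mset (take l y))) * card (permutations_of_multiset (mset (drop l y)))"
proof -
  let ?A = "permutations_of_multiset (mset (take l y))" and ?B = "permutations_of_multiset (mset (drop l y))"
  have len: "length p = length (take l y)" if "mset p = mset (take l y)" for p
    using that by (metis size_mset)
  have len': "length q = length (drop l y)" if "mset q = mset (drop l y)" for q
    using that by (metis size_mset)
  have "bij_betw (\<lambda>zs. (take l zs, drop l zs)) (block_perms l y) (?A \<times> ?B)"
  proof (rule bij_betw_byWitness[where f' = "\<lambda>(p, q). p @ q"])
    show "\<forall>zs\<in>block_perms l y. (case (take l zs, drop l zs) of (p, q) \<Rightarrow> p @ q) = zs"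
      by simp
    show "\<forall>pq\<in>?A \<times> ?B. (take l (case pq of (p, q) \<Rightarrow> p @ q), drop l (case pq of (p, q) \<Rightarrow> p @ q)) = pq"
    proof
      fix pq assume "pq \<in> ?A \<times> ?B"
      then obtain p q where "pq = (p, q)" "mset p = mset (take l y)"
        by (auto simp: permutations_of_multiset_def)
      moreover have "length p = l"
        using len[OF \<open>mset p = _\<close>] assms by simp
      ultimately show "(take l (case pq of (p, q) \<Rightarrow> p @ q), drop l (case pq of (p, q) \<Rightarrow> p @ q)) = pq"
        by simp
    qed
    show "(\<lambda>zs. (take l zs, drop l zs)) ` block_perms l y \<subseteq> ?A \<times> ?B"
      by (auto simp: block_perms_def permutations_of_multiset_def)
    show "(\<lambda>(p, q). p @ q) ` (?A \<times> ?B) \<subseteq> block_perms l y"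
    proof
      fix z assume "z \<in> (\<lambda>(p, q). p @ q) ` (?A \<times> ?B)"
      then obtain p q where z: "z = p @ q" "mset p = mset (take l y)" "mset q = mset (drop l y)"
        by (auto simp: permutations_of_multiset_def)
      have "length p = l" "length q = length y - l"
        using len[OF z(2)] len'[OF z(3)] assms by simp_all
      then show "z \<in> block_perms l y"
        using z assms by (simp add: block_perms_def)
    qed
  qed
  then show ?thesis
    by (simp add: bij_betw_same_card card_cartesian_product)
qed

lemma sum_list_take_drop: "sum_list xs = sum_list (take l xs) + sum_list (drop l xs)"
  by (metis append_take_drop_id sum_list_append)

lemma sort_blocks_in_sorted_blocks:
  assumes "l \<le> m" "zs \<in> weak_compositions m k"
  shows "sort_blocks l zs \<in> sorted_blocks m l k"
proof -
  have "sum_list (sort (take l zs)) = sum_list (take l zs)" "sum_list (sort (drop l zs)) = sum_list (drop l zs)"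
    by (simp_all flip: sum_mset_sum_list)
  then have "sum_list (sort_blocks l zs) = k"
    using assms(2) sum_list_take_drop[of zs l] by (simp add: sort_blocks_def weak_compositions_def)
  moreover have "length (sort (take l zs)) = l"
    using assms by (simp add: weak_compositions_def)
  ultimately show ?thesis
    using assms by (simp add: sorted_blocks_def sort_blocks_def weak_compositions_def)
qed

lemma sort_blocks_fiber:
  assumes "l \<le> m" "y \<in> sorted_blocks m l k"
  shows "{zs \<in> weak_compositions m k. sort_blocks l zs = y} = block_perms l y"
proof (rule set_eqI)
  fix zs
  have y: "length y = m" "sorted (take l y)" "sorted (drop l y)" "sum_list y = k"
    using assms(2) by (auto simp: sorted_blocks_def)
  show "zs \<in> {zs \<in> weak_compositions m k. sort_blocks l zs = y} \<longleftrightarrow> zs \<in> block_perms l y"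
  proof
    assume "zs \<in> {zs \<in> weak_compositions m k. sort_blocks l zs = y}"
    then have zs: "length zs = m" "sort (take l zs) @ sort (drop l zs) = y"
      by (auto simp: weak_compositions_def sort_blocks_def)
    then have "take l y = sort (take l zs)" "drop l y = sort (drop l zs)"
      using assms(1) by auto
    then show "zs \<in> block_perms l y"
      using zs(1) y(1) by (simp add: block_perms_def)
  next
    assume "zs \<in> block_perms l y"
    then have zs: "length zs = m" "mset (take l zs) = mset (take l y)" "mset (drop l zs) = mset (drop l y)"
      using y(1) by (auto simp: block_perms_def)
    have "sort (take l zs) = take l y" "sort (drop l zs) = drop l y"
      by (rule properties_for_sort; use zs y in simp)+
    moreover have "sum_list zs = k"
      using zs(2,3) y(4) sum_list_take_drop[of zs l] sum_list_take_drop[of y l] by (metis sum_mset_sum_list)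
    ultimately show "zs \<in> {zs \<in> weak_compositions m k. sort_blocks l zs = y}"
      using zs(1) by (simp add: weak_compositions_def sort_blocks_def)
  qed
qed

lemma sum_sorted_blocks_eq_fps_nth:
  assumes lm: "l \<le> m"
  shows "(\<Sum>xs\<in>sorted_blocks m l k. multinom l (count_list (take l xs)) k * multinom (m - l) (count_list (drop l xs)) k
            * (prod_list (map f (take l xs)) * prod_list (map g (drop l xs))))
       = (Abs_fps f ^ l * Abs_fps g ^ (m - l)) $ k"
proof -
  let ?w = "\<lambda>zs. prod_list (map f (take l zs)) * prod_list (map g (drop l zs))"
  have "finite (sorted_blocks m l k)"
    by (rule finite_subset[OF _ finite_weak_compositions[of m k]])
      (auto simp: sorted_blocks_def weak_compositions_def)
  have "(Abs_fps f ^ l * Abs_fps g ^ (m - l)) $ k = (\<Sum>zs\<in>weak_compositions m k. ?w zs)"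
    using lm sum_weak_compositions_eq_fps_nth[where a = l and b = "m - l" and f = f and g = g and k = k] by simp
  also have "\<dots> = (\<Sum>y\<in>sorted_blocks m l k. \<Sum>zs\<in>{zs \<in> weak_compositions m k. sort_blocks l zs = y}. ?w zs)"
    by (rule sum.group[symmetric]) (use \<open>finite (sorted_blocks m l k)\<close> sort_blocks_in_sorted_blocks[OF lm] in auto)
  also have "\<dots> = (\<Sum>y\<in>sorted_blocks m l k. card (block_perms l y) * ?w y)"
  proof (rule sum.cong[OF refl])
    fix y assume y: "y \<in> sorted_blocks m l k"
    have "?w zs = ?w y" if "zs \<in> block_perms l y" for zs
      using that by (simp add: block_perms_def flip: prod_mset_prod_list)
    then show "(\<Sum>zs\<in>{zs \<in> weak_compositions m k. sort_blocks l zs = y}. ?w zs) = card (block_perms l y) * ?w y"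
      unfolding sort_blocks_fiber[OF lm y] by simp
  qed
  also have "\<dots> = (\<Sum>xs\<in>sorted_blocks m l k. multinom l (count_list (take l xs)) k
      * multinom (m - l) (count_list (drop l xs)) k * ?w xs)"
  proof (rule sum.cong[OF refl])
    fix y assume "y \<in> sorted_blocks m l k"
    then have y: "length y = m" "sum_list y = k"
      by (auto simp: sorted_blocks_def)
    then have "sum_list (take l y) \<le> k" "sum_list (drop l y) \<le> k"
      using sum_list_take_drop[of y l] by linarith+
    then show "card (block_perms l y) * ?w y = multinom l (count_list (take l y)) k
      * multinom (m - l) (count_list (drop l y)) k * ?w y"
      using multinom_eq_card_permutations_of_multiset[of "take l y" k]
        multinom_eq_card_permutations_of_multiset[of "drop l y" k] card_block_perms[of l y] y lm
      by (simp add: min_absorb2)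
  qed
  finally show ?thesis
    by simp
qed

definition mixed_lists :: "'a set set \<Rightarrow> 'a set set \<Rightarrow> nat \<Rightarrow> nat \<Rightarrow> nat \<Rightarrow> 'a set list set" where
  "mixed_lists HS ES n l k = {Ls. length Ls = n \<and> set Ls \<subseteq> HS \<union> ES \<and>
     length (filter (\<lambda>X. X \<in> HS) Ls) = l \<and> sum_list (map card Ls) = k}"

definition size_fps :: "'a set set \<Rightarrow> nat fps" where
  "size_fps XS = Abs_fps (\<lambda>j. card {X \<in> XS. card X = j})"

lemma binomial_term_Suc:
  fixes x y :: "'a :: comm_semiring_1"
  shows "of_nat (Suc n choose l) * (x ^ l * y ^ (Suc n - l)) =
    (if l = 0 then 0 else x * (of_nat (n choose (l - 1)) * (x ^ (l - 1) * y ^ (n - (l - 1))))) +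
    y * (of_nat (n choose l) * (x ^ l * y ^ (n - l)))"
proof (cases l)
  case 0
  then show ?thesis
    by (simp add: mult.left_commute)
next
  case (Suc l')
  show ?thesis
  proof (cases "l' < n")
    case True
    then have "Suc n - Suc l' = Suc (n - Suc l')" "n - l' = Suc (n - Suc l')"
      by simp_all
    then show ?thesis
      using Suc by (simp add: algebra_simps)
  next
    case False
    then have "n choose Suc l' = 0" "Suc n - Suc l' = n - l'"
      by simp_all
    then show ?thesis
      using Suc by (simp add: algebra_simps del: binomial_eq_0_iff)
  qed
qed

context
  fixes HS ES :: "'a set set"
  assumes finite_HS: "finite HS" and finite_ES: "finite ES" and disjoint: "HS \<inter> ES = {}"
begin

lemma finite_mixed_lists: "finite (mixed_lists HS ES n l k)"
proof (rule finite_subset)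
  show "mixed_lists HS ES n l k \<subseteq> {Ls. set Ls \<subseteq> HS \<union> ES \<and> length Ls = n}"
    by (auto simp: mixed_lists_def)
  show "finite {Ls. set Ls \<subseteq> HS \<union> ES \<and> length Ls = n}"
    by (rule finite_lists_length_eq) (use finite_HS finite_ES in simp)
qed

lemma mixed_lists_0: "mixed_lists HS ES 0 l k = (if l = 0 \<and> k = 0 then {[]} else {})"
  by (auto simp: mixed_lists_def)

lemma mixed_lists_Suc:
  "mixed_lists HS ES (Suc n) l k =
     (\<Union>X\<in>{X\<in>HS. card X \<le> k \<and> 1 \<le> l}. (#) X ` mixed_lists HS ES n (l - 1) (k - card X)) \<union>
     (\<Union>X\<in>{X\<in>ES. card X \<le> k}. (#) X ` mixed_lists HS ES n l (k - card X))"
proof (rule set_eqI)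
  fix Ls
  show "Ls \<in> mixed_lists HS ES (Suc n) l k \<longleftrightarrow>
    Ls \<in> (\<Union>X\<in>{X\<in>HS. card X \<le> k \<and> 1 \<le> l}. (#) X ` mixed_lists HS ES n (l - 1) (k - card X)) \<union>
          (\<Union>X\<in>{X\<in>ES. card X \<le> k}. (#) X ` mixed_lists HS ES n l (k - card X))"
  proof
    assume "Ls \<in> mixed_lists HS ES (Suc n) l k"
    then obtain X Ms where Ls: "Ls = X # Ms" "length Ms = n" "X \<in> HS \<union> ES" "set Ms \<subseteq> HS \<union> ES"
      "length (filter (\<lambda>X. X \<in> HS) (X # Ms)) = l" "card X + sum_list (map card Ms) = k"
      unfolding mixed_lists_def by (cases Ls) auto
    show "Ls \<in> (\<Union>X\<in>{X\<in>HS. card X \<le> k \<and> 1 \<le> l}. (#) X ` mixed_lists HS ES n (l - 1) (k - card X)) \<union>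
          (\<Union>X\<in>{X\<in>ES. card X \<le> k}. (#) X ` mixed_lists HS ES n l (k - card X))"
    proof (cases "X \<in> HS")
      case True
      then have "Ms \<in> mixed_lists HS ES n (l - 1) (k - card X)" "1 \<le> l" "card X \<le> k"
        using Ls by (auto simp: mixed_lists_def)
      then show ?thesis
        using Ls(1) True by blast
    next
      case False
      then have "X \<in> ES" "Ms \<in> mixed_lists HS ES n l (k - card X)" "card X \<le> k"
        using Ls by (auto simp: mixed_lists_def)
      then show ?thesis
        using Ls(1) by blast
    qed
  next
    assume "Ls \<in> (\<Union>X\<in>{X\<in>HS. card X \<le> k \<and> 1 \<le> l}. (#) X ` mixed_lists HS ES n (l - 1) (k - card X)) \<union>
          (\<Union>X\<in>{X\<in>ES. card X \<le> k}. (#) X ` mixed_lists HS ES n l (k - card X))"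
    then show "Ls \<in> mixed_lists HS ES (Suc n) l k"
    proof
      assume "Ls \<in> (\<Union>X\<in>{X\<in>HS. card X \<le> k \<and> 1 \<le> l}. (#) X ` mixed_lists HS ES n (l - 1) (k - card X))"
      then obtain X Ms where "X \<in> HS" "card X \<le> k" "1 \<le> l" "Ms \<in> mixed_lists HS ES n (l - 1) (k - card X)"
        "Ls = X # Ms"
        by blast
      then show ?thesis
        by (auto simp: mixed_lists_def)
    next
      assume "Ls \<in> (\<Union>X\<in>{X\<in>ES. card X \<le> k}. (#) X ` mixed_lists HS ES n l (k - card X))"
      then obtain X Ms where X: "X \<in> ES" "card X \<le> k" "Ms \<in> mixed_lists HS ES n l (k - card X)" "Ls = X # Ms"
        by blast
      then have "X \<notin> HS"
        using disjoint by blast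
      then show ?thesis
        using X by (auto simp: mixed_lists_def)
    qed
  qed
qed

lemma sum_by_card:
  assumes "finite A"
  shows "(\<Sum>X\<in>{X\<in>A. card X \<le> k}. \<phi> (card X)) = (\<Sum>j\<le>k. card {X\<in>A. card X = j} * (\<phi> j :: nat))"
proof -
  have "(\<Sum>X\<in>{X\<in>A. card X \<le> k}. \<phi> (card X)) = (\<Sum>j\<le>k. \<Sum>X\<in>{X \<in> {X\<in>A. card X \<le> k}. card X = j}. \<phi> (card X))"
    by (rule sum.group[symmetric]) (use assms in auto)
  also have "\<dots> = (\<Sum>j\<le>k. card {X\<in>A. card X = j} * \<phi> j)"
  proof (rule sum.cong[OF refl])
    fix j assume "j \<in> {..k}"
    then have "{X \<in> {X\<in>A. card X \<le> k}. card X = j} = {X\<in>A. card X = j}"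
      by auto
    then show "(\<Sum>X\<in>{X \<in> {X\<in>A. card X \<le> k}. card X = j}. \<phi> (card X)) = card {X\<in>A. card X = j} * \<phi> j"
      by simp
  qed
  finally show ?thesis .
qed

lemma card_mixed_lists_Suc:
  "card (mixed_lists HS ES (Suc n) l k) =
     (if l = 0 then 0 else (\<Sum>j\<le>k. card {X\<in>HS. card X = j} * card (mixed_lists HS ES n (l - 1) (k - j)))) +
     (\<Sum>j\<le>k. card {X\<in>ES. card X = j} * card (mixed_lists HS ES n l (k - j)))"
proof -
  let ?U1 = "\<Union>X\<in>{X\<in>HS. card X \<le> k \<and> 1 \<le> l}. (#) X ` mixed_lists HS ES n (l - 1) (k - card X)"
  let ?U2 = "\<Union>X\<in>{X\<in>ES. card X \<le> k}. (#) X ` mixed_lists HS ES n l (k - card X)"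
  have fin: "finite ?U1" "finite ?U2"
    using finite_HS finite_ES finite_mixed_lists by auto
  have disj: "?U1 \<inter> ?U2 = {}"
    using disjoint by auto
  have c1: "card ?U1 = (\<Sum>X\<in>{X\<in>HS. card X \<le> k \<and> 1 \<le> l}. card (mixed_lists HS ES n (l - 1) (k - card X)))"
    by (subst card_UN_disjoint) (use finite_HS finite_mixed_lists in \<open>auto simp: card_image\<close>)
  have c2: "card ?U2 = (\<Sum>X\<in>{X\<in>ES. card X \<le> k}. card (mixed_lists HS ES n l (k - card X)))"
    by (subst card_UN_disjoint) (use finite_ES finite_mixed_lists in \<open>auto simp: card_image\<close>)
  have "card ?U1 = (if l = 0 then 0 else (\<Sum>j\<le>k. card {X\<in>HS. card X = j} * card (mixed_lists HS ES n (l - 1) (k - j))))"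
  proof (cases "l = 0")
    case False
    then have "{X\<in>HS. card X \<le> k \<and> 1 \<le> l} = {X\<in>HS. card X \<le> k}"
      by auto
    then show ?thesis
      using c1 False sum_by_card[OF finite_HS, of "\<lambda>j. card (mixed_lists HS ES n (l - 1) (k - j))" k] by simp
  qed simp
  moreover have "card ?U2 = (\<Sum>j\<le>k. card {X\<in>ES. card X = j} * card (mixed_lists HS ES n l (k - j)))"
    using c2 sum_by_card[OF finite_ES, of "\<lambda>j. card (mixed_lists HS ES n l (k - j))" k] by simp
  ultimately show ?thesis
    unfolding mixed_lists_Suc card_Un_disjoint[OF fin disj] by simp
qed

lemma card_mixed_lists:
  "card (mixed_lists HS ES n l k) = (of_nat (n choose l) * (size_fps HS ^ l * size_fps ES ^ (n - l))) $ k"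
proof (induction n arbitrary: l k)
  case 0
  then show ?case
    by (cases l) (simp_all add: mixed_lists_0)
next
  case (Suc n)
  show ?case
    unfolding binomial_term_Suc card_mixed_lists_Suc
    by (simp add: fps_mult_nth atLeast0AtMost Suc.IH size_fps_def)
qed

lemma card_lists_by_kind_count:
  "card {Ls. length Ls = n \<and> set Ls \<subseteq> HS \<union> ES \<and> P (length (filter (\<lambda>X. X \<in> HS) Ls)) \<and> sum_list (map card Ls) = k}
     = (\<Sum>l | l \<le> n \<and> P l. card (mixed_lists HS ES n l k))"
proof -
  have "{Ls. length Ls = n \<and> set Ls \<subseteq> HS \<union> ES \<and> P (length (filter (\<lambda>X. X \<in> HS) Ls)) \<and> sum_list (map card Ls) = k}
     = (\<Union>l\<in>{l. l \<le> n \<and> P l}. mixed_lists HS ES n l k)"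
    using length_filter_le by (fastforce simp: mixed_lists_def)
  also have "card \<dots> = (\<Sum>l | l \<le> n \<and> P l. card (mixed_lists HS ES n l k))"
    by (rule card_UN_disjoint) (use finite_mixed_lists in \<open>auto simp: mixed_lists_def\<close>)
  finally show ?thesis .
qed

end

section \<open>Counting Type I and Type II sets\<close>

definition branches :: "nat \<Rightarrow> nat list option set \<Rightarrow> nat list option set list" where
  "branches m S = map (\<lambda>i. branch i S) [0..<m]"

lemma card_glue:
  assumes "\<And>i. i < m \<Longrightarrow> finite (Cs i)"
  shows "card (glue m with_root False Cs) = of_bool with_root + (\<Sum>i<m. card (Cs i - {None}))"
proof -
  have "card (\<Union>i<m. lift i ` (Cs i - {None})) = (\<Sum>i<m. card (lift i ` (Cs i - {None})))"
    by (rule card_UN_disjoint) (use assms lift_eq_lift_iff in fastforce)+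
  also have "\<dots> = (\<Sum>i<m. card (Cs i - {None}))"
    by (intro sum.cong refl card_image inj_on_subset[OF inj_lift]) simp
  moreover have "finite (\<Union>i<m. lift i ` (Cs i - {None}))" "Some [] \<notin> (\<Union>i<m. lift i ` (Cs i - {None}))"
    using assms by auto
  ultimately show ?thesis
    unfolding glue_def by (cases with_root) simp_all
qed

lemma nth_in_Pow: "\<lbrakk>set Ls \<subseteq> Pow A; i < length Ls\<rbrakk> \<Longrightarrow> Ls ! i \<subseteq> A"
  using nth_mem by blast

lemma set_branches_subset:
  assumes "1 \<le> h" "S \<subseteq> tverts m h"
  shows "set (branches m S) \<subseteq> Pow (tverts m (h - 1) - {None})"
proof
  fix X assume "X \<in> set (branches m S)"
  then obtain i where "i < m" "X = branch i S"
    by (auto simp: branches_def)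
  then show "X \<in> Pow (tverts m (h - 1) - {None})"
    using branch_subset_tverts[OF assms(2,1)] by auto
qed

lemma glue_nth_branches:
  assumes "1 \<le> h" "S \<subseteq> tverts m h" "None \<notin> S"
  shows "glue m (Some [] \<in> S) False (\<lambda>i. branches m S ! i) = S"
proof -
  have "glue m (Some [] \<in> S) False (\<lambda>i. branches m S ! i) = glue m (Some [] \<in> S) False (\<lambda>i. branch i S)"
    unfolding glue_def branches_def by auto
  with glue_branch[OF assms] show ?thesis
    by simp
qed

lemma branches_glue_nth:
  assumes "length Ls = m" "\<forall>X\<in>set Ls. None \<notin> X"
  shows "branches m (glue m r False (\<lambda>i. Ls ! i)) = Ls"
proof (rule nth_equalityI)
  fix i assume "i < length (branches m (glue m r False (\<lambda>i. Ls ! i)))"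
  then have "i < m"
    by (simp add: branches_def)
  then show "branches m (glue m r False (\<lambda>i. Ls ! i)) ! i = Ls ! i"
    using branch_glue[OF \<open>i < m\<close>] assms nth_mem[of i Ls] by (auto simp: branches_def)
qed (use assms in \<open>simp add: branches_def\<close>)

lemma card_glue_nth:
  assumes "length Ls = m" "set Ls \<subseteq> Pow (tverts m k - {None})"
  shows "card (glue m r False (\<lambda>i. Ls ! i)) = of_bool r + sum_list (map card Ls)"
proof -
  have "finite (Ls ! i)" "Ls ! i - {None} = Ls ! i" if "i < m" for i
    using nth_in_Pow[OF assms(2)] assms(1) that finite_subset[of "Ls ! i" "tverts m k"] by auto
  then have "card (glue m r False (\<lambda>i. Ls ! i)) = of_bool r + (\<Sum>i<m. card (Ls ! i))"
    using card_glue[of m "\<lambda>i. Ls ! i" r] by simp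
  also have "(\<Sum>i<m. card (Ls ! i)) = sum_list (map card Ls)"
    using assms(1) by (simp add: sum_list_sum_nth atLeast0LessThan)
  finally show ?thesis .
qed

lemma card_sets_eq_card_branch_lists:
  assumes h: "1 \<le> h"
  shows "card {S. S \<subseteq> tverts m h - {None} \<and> (Some [] \<in> S \<longleftrightarrow> r) \<and> R (branches m S) \<and> card S = k}
    = card {Ls. length Ls = m \<and> set Ls \<subseteq> Pow (tverts m (h - 1) - {None}) \<and> R Ls \<and>
        of_bool r + sum_list (map card Ls) = k}"
proof (rule bij_betw_same_card)
  let ?A = "{S. S \<subseteq> tverts m h - {None} \<and> (Some [] \<in> S \<longleftrightarrow> r) \<and> R (branches m S) \<and> card S = k}"
  let ?B = "{Ls. length Ls = m \<and> set Ls \<subseteq> Pow (tverts m (h - 1) - {None}) \<and> R Ls \<and>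
    of_bool r + sum_list (map card Ls) = k}"
  let ?glue = "\<lambda>Ls. glue m r False (\<lambda>i. Ls ! i)"
  show "bij_betw (branches m) ?A ?B"
  proof (rule bij_betw_byWitness[where f' = ?glue])
    show "\<forall>S\<in>?A. ?glue (branches m S) = S"
      using glue_nth_branches[OF h] by auto
    show "\<forall>Ls\<in>?B. branches m (?glue Ls) = Ls"
      using branches_glue_nth by blast
    show "branches m ` ?A \<subseteq> ?B"
    proof
      fix Ls assume "Ls \<in> branches m ` ?A"
      then obtain S where S: "S \<in> ?A" "Ls = branches m S"
        by blast
      have len: "length Ls = m" and set: "set Ls \<subseteq> Pow (tverts m (h - 1) - {None})"
        using S set_branches_subset[OF h, of S m] by (auto simp: branches_def)
      have "S \<subseteq> tverts m h" "None \<notin> S" "Some [] \<in> S \<longleftrightarrow> r"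
        using S(1) by auto
      then have "?glue Ls = S"
        using glue_nth_branches[OF h, of S m] S(2) by simp
      then have "card S = of_bool r + sum_list (map card Ls)"
        using card_glue_nth[OF len set, of r] by simp
      then show "Ls \<in> ?B"
        using S len set by simp
    qed
    show "?glue ` ?B \<subseteq> ?A"
    proof
      fix S assume "S \<in> ?glue ` ?B"
      then obtain Ls where Ls: "Ls \<in> ?B" "S = ?glue Ls"
        by blast
      then have len: "length Ls = m" and set: "set Ls \<subseteq> Pow (tverts m (h - 1) - {None})"
        by simp_all
      have "S \<subseteq> tverts m h"
        unfolding Ls(2) using nth_in_Pow[OF set] len by (intro glue_subset_tverts[OF h]) auto
      moreover have "branches m S = Ls"
        unfolding Ls(2) using set by (intro branches_glue_nth[OF len]) auto
      moreover have "card S = k"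
        using Ls card_glue_nth[OF len set] by simp
      ultimately show "S \<in> ?A"
        using Ls by (simp add: subset_Diff_insert)
    qed
  qed
qed

lemma finite_typeI_sets: "finite {X. typeI m h X}"
  by (rule finite_subset[of _ "Pow (tverts m h)"]) (auto simp: typeI_iff_dominates)

lemma finite_typeII_sets: "finite {X. typeII m h X}"
  by (rule finite_subset[of _ "Pow (tverts m h)"]) (auto simp: typeII_iff_dominates)

lemma bracket_eq_card_mixed_lists:
  assumes "l \<le> m"
  shows "bracket m h l (int k) = card (mixed_lists {X. typeII m h X} {X. typeI m h X} m l k)"
proof -
  let ?H = "\<lambda>i. Hcnt m h (int i)" and ?E = "\<lambda>i. Ecnt m h (int i)"
  have "bracket m h l (int k) = (m choose l) * (\<Sum>xs\<in>sorted_blocks m l k.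
      multinom l (count_list (take l xs)) k * multinom (m - l) (count_list (drop l xs)) k
      * (prod_list (map ?H (take l xs)) * prod_list (map ?E (drop l xs))))"
    unfolding bracket_def sorted_blocks_def by (simp add: sum_distrib_left mult.assoc)
  also have "\<dots> = (m choose l) * (Abs_fps ?H ^ l * Abs_fps ?E ^ (m - l)) $ k"
    by (simp only: sum_sorted_blocks_eq_fps_nth[OF assms])
  also have "\<dots> = (of_nat (m choose l) * (size_fps {X. typeII m h X} ^ l * size_fps {X. typeI m h X} ^ (m - l))) $ k"
    by (simp add: size_fps_def Hcnt_def Ecnt_def flip: fps_of_nat)
  also have "\<dots> = card (mixed_lists {X. typeII m h X} {X. typeI m h X} m l k)"
    using not_typeI_and_typeII
    by (intro card_mixed_lists[symmetric] finite_typeII_sets finite_typeI_sets) blast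
  finally show ?thesis .
qed

lemma bracket_minus_one_eq_card_mixed_lists:
  assumes "l \<le> m"
  shows "bracket m h l (int k - 1) =
    (if k = 0 then 0 else card (mixed_lists {X. typeII m h X} {X. typeI m h X} m l (k - 1)))"
proof (cases k)
  case 0
  then show ?thesis
    by (simp add: bracket_def)
next
  case (Suc k')
  then have "int k - 1 = int k'"
    by simp
  then show ?thesis
    using bracket_eq_card_mixed_lists[OF assms, of h k'] Suc by simp
qed

lemma set_branches_subset_types_iff:
  "set (branches m S) \<subseteq> {X. typeII m k X} \<union> {X. typeI m k X} \<longleftrightarrow>
    (\<forall>i<m. typeI m k (branch i S) \<or> typeII m k (branch i S))"
  by (auto simp: branches_def image_subset_iff atLeast0LessThan)

lemma length_filter_typeII_branches:
  "length (filter (\<lambda>X. X \<in> {X. typeII m k X}) (branches m S)) = card {i. i < m \<and> typeII m k (branch i S)}"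
proof -
  have "{i. i < m \<and> branches m S ! i \<in> {X. typeII m k X}} = {i. i < m \<and> typeII m k (branch i S)}"
    by (auto simp: branches_def)
  then show ?thesis
    by (simp add: length_filter_conv_card branches_def)
qed

lemma card_sets_by_typeII_branches:
  assumes h: "1 \<le> h"
  shows "card {S. S \<subseteq> tverts m h - {None} \<and> (Some [] \<in> S \<longleftrightarrow> r) \<and>
      (\<forall>i<m. typeI m (h - 1) (branch i S) \<or> typeII m (h - 1) (branch i S)) \<and>
      P (card {i. i < m \<and> typeII m (h - 1) (branch i S)}) \<and> card S = k}
    = (if r \<and> k = 0 then 0 else
       \<Sum>l | l \<le> m \<and> P l. card (mixed_lists {X. typeII m (h - 1) X} {X. typeI m (h - 1) X} m l (k - of_bool r)))"
proof -
  let ?HS = "{X. typeII m (h - 1) X}" and ?ES = "{X. typeI m (h - 1) X}"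
  let ?R = "\<lambda>Ls. set Ls \<subseteq> ?HS \<union> ?ES \<and> P (length (filter (\<lambda>X. X \<in> ?HS) Ls))"
  note branches_facts = set_branches_subset_types_iff[where k = "h - 1"] length_filter_typeII_branches[where k = "h - 1"]
  have "card {S. S \<subseteq> tverts m h - {None} \<and> (Some [] \<in> S \<longleftrightarrow> r) \<and>
      (\<forall>i<m. typeI m (h - 1) (branch i S) \<or> typeII m (h - 1) (branch i S)) \<and>
      P (card {i. i < m \<and> typeII m (h - 1) (branch i S)}) \<and> card S = k}
    = card {S. S \<subseteq> tverts m h - {None} \<and> (Some [] \<in> S \<longleftrightarrow> r) \<and> ?R (branches m S) \<and> card S = k}"
    by (simp only: branches_facts conj_assoc)
  also have "\<dots> = card {Ls. length Ls = m \<and> set Ls \<subseteq> Pow (tverts m (h - 1) - {None}) \<and> ?R Ls \<and>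
        of_bool r + sum_list (map card Ls) = k}"
    by (rule card_sets_eq_card_branch_lists[OF h])
  also have "{Ls. length Ls = m \<and> set Ls \<subseteq> Pow (tverts m (h - 1) - {None}) \<and> ?R Ls \<and>
        of_bool r + sum_list (map card Ls) = k}
     = (if r \<and> k = 0 then {} else {Ls. length Ls = m \<and> set Ls \<subseteq> ?HS \<union> ?ES \<and>
        P (length (filter (\<lambda>X. X \<in> ?HS) Ls)) \<and> sum_list (map card Ls) = k - of_bool r})"
  proof -
    have "?HS \<union> ?ES \<subseteq> Pow (tverts m (h - 1) - {None})"
      by (auto simp: typeI_iff_dominates typeII_iff_dominates)
    then show ?thesis
      by (cases r) auto
  qed
  also have "card \<dots> = (if r \<and> k = 0 then 0 else
       \<Sum>l | l \<le> m \<and> P l. card (mixed_lists ?HS ?ES m l (k - of_bool r)))"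
  proof -
    have "?HS \<inter> ?ES = {}"
      using not_typeI_and_typeII by blast
    then show ?thesis
      using card_lists_by_kind_count[OF finite_typeII_sets finite_typeI_sets] by simp
  qed
  finally show ?thesis .
qed

lemma Hcnt_eq_bracket:
  assumes m: "2 \<le> m" and h: "1 \<le> h"
  shows "Hcnt m h (int k) = (if odd h then bracket m (h - 1) 1 (int k) else bracket m (h - 1) m (int k))"
proof -
  define L where "L = (if odd h then 1 else m)"
  have "L \<le> m"
    using m by (simp add: L_def)
  have "{S. typeII m h S \<and> int (card S) = int k} =
    {S. S \<subseteq> tverts m h - {None} \<and> (Some [] \<in> S \<longleftrightarrow> False) \<and>
      (\<forall>i<m. typeI m (h - 1) (branch i S) \<or> typeII m (h - 1) (branch i S)) \<and>
      card {i. i < m \<and> typeII m (h - 1) (branch i S)} = L \<and> card S = k}"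
  proof (rule set_eqI)
    fix S
    show "S \<in> {S. typeII m h S \<and> int (card S) = int k} \<longleftrightarrow> S \<in> {S. S \<subseteq> tverts m h - {None} \<and>
      (Some [] \<in> S \<longleftrightarrow> False) \<and> (\<forall>i<m. typeI m (h - 1) (branch i S) \<or> typeII m (h - 1) (branch i S)) \<and>
      card {i. i < m \<and> typeII m (h - 1) (branch i S)} = L \<and> card S = k}"
    proof (cases "S \<subseteq> tverts m h - {None}")
      case True
      show ?thesis
        using typeII_iff_branches[OF h m True typeII_obs_stem_root[OF m]] True
        by (auto simp: L_def)
    qed (auto simp: typeII_iff_dominates)
  qed
  moreover have "{l. l \<le> m \<and> l = L} = {L}"
    using \<open>L \<le> m\<close> by auto
  ultimately have "Hcnt m h (int k) = bracket m (h - 1) L (int k)"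
    unfolding Hcnt_def
    using card_sets_by_typeII_branches[OF h, of m False "\<lambda>l. l = L" k] bracket_eq_card_mixed_lists[OF \<open>L \<le> m\<close>]
    by simp
  then show ?thesis
    by (simp add: L_def)
qed

lemma Ecnt_eq_bracket:
  assumes m: "2 \<le> m" and h: "1 \<le> h"
  shows "Ecnt m h (int k) =
    (if odd h then bracket m (h - 1) 0 (int k) + (\<Sum>l\<le>m. bracket m (h - 1) l (int k - 1))
     else (\<Sum>l<m. bracket m (h - 1) l (int k)) + (\<Sum>l\<le>m. bracket m (h - 1) l (int k - 1)))"
proof -
  define P where "P = (\<lambda>l::nat. if odd h then l = 0 else l < m)"
  let ?A = "\<lambda>r P. {S. S \<subseteq> tverts m h - {None} \<and> (Some [] \<in> S \<longleftrightarrow> r) \<and>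
      (\<forall>i<m. typeI m (h - 1) (branch i S) \<or> typeII m (h - 1) (branch i S)) \<and>
      P (card {i. i < m \<and> typeII m (h - 1) (branch i S)}) \<and> card S = k}"
  have typeI_sets: "{S. typeI m h S \<and> int (card S) = int k} = ?A True (\<lambda>_. True) \<union> ?A False P"
  proof (rule set_eqI)
    fix S
    show "S \<in> {S. typeI m h S \<and> int (card S) = int k} \<longleftrightarrow> S \<in> ?A True (\<lambda>_. True) \<union> ?A False P"
    proof (cases "S \<subseteq> tverts m h - {None}")
      case True
      show ?thesis
        using typeI_iff_branches[OF h m True typeII_obs_stem_root[OF m]] True
        by (cases "Some [] \<in> S") (simp_all add: P_def)
    qed (auto simp: typeI_iff_dominates)
  qed
  have finite_A: "finite (?A r Q)" for r Q
    by (rule finite_subset[of _ "Pow (tverts m h)"]) auto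
  have card_with_root: "card (?A True (\<lambda>_. True)) = (\<Sum>l\<le>m. bracket m (h - 1) l (int k - 1))"
    using card_sets_by_typeII_branches[OF h, of m True "\<lambda>_. True" k]
      bracket_minus_one_eq_card_mixed_lists[of _ m "h - 1" k]
    by (simp add: atMost_def)
  have "{l. l \<le> m \<and> P l} = (if odd h then {0} else {..<m})"
    by (auto simp: P_def)
  then have card_without_root: "card (?A False P) = (if odd h then bracket m (h - 1) 0 (int k) else \<Sum>l<m. bracket m (h - 1) l (int k))"
    using card_sets_by_typeII_branches[OF h, of m False P k] bracket_eq_card_mixed_lists[of _ m "h - 1" k]
    by simp
  have "card (?A True (\<lambda>_. True) \<union> ?A False P) = card (?A True (\<lambda>_. True)) + card (?A False P)"
    by (rule card_Un_disjoint[OF finite_A finite_A]) auto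
  then show ?thesis
    unfolding Ecnt_def typeI_sets card_with_root card_without_root by simp
qed

theorem mainTheorem8:
  fixes m h :: nat
  assumes "m \<ge> 2" and "h \<ge> 1"
  shows "(\<forall>S. typeII m h S \<longrightarrow>
            (if odd h
             then (\<exists>i<m. closed_nbhd (tverts m h) (tadj m h) {Some []}
                          - pd_obs_inf (tverts m h) (tadj m h) S = {None, Some [i]})
             else closed_nbhd (tverts m h) (tadj m h) {Some []}
                          - pd_obs_inf (tverts m h) (tadj m h) S = {None, Some []}))
       \<and> (\<forall>k::nat. Hcnt m h (int k) =
            (if odd h then bracket m (h - 1) 1 (int k) else bracket m (h - 1) m (int k)))
       \<and> (\<forall>k::nat. Ecnt m h (int k) =
            (if odd h
             then bracket m (h - 1) 0 (int k) + (\<Sum>l\<le>m. bracket m (h - 1) l (int k - 1))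
             else (\<Sum>l<m. bracket m (h - 1) l (int k)) + (\<Sum>l\<le>m. bracket m (h - 1) l (int k - 1))))"
  using typeII_closed_nbhd_root[OF assms(2,1) _ typeII_obs_stem_root[OF assms(1)]]
    Hcnt_eq_bracket[OF assms] Ecnt_eq_bracket[OF assms]
  by (auto simp: typeII_iff_dominates)

end
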